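(* Let $\mathcal{X}\subset\mathbb{R}^d$ be compact, $k$ a kernel on $\mathcal{X}$, $\sigma>0$, and suppose $k^\sigma(x,y)\le B$ for all $x,y\in\mathcal{X}$. Let $f\in\mathcal{H}_k$, $g\in\mathcal{H}_{\sigma^2\delta}$ and $h=f+g$ (so $h\in\mathcal{H}_{k^\sigma}$). Let $x_1,\dots,x_T$ be generated by Algorithm 3: $x_t\in\arg\max_{x\in\mathcal{X}}\widehat m_{t-1}(x)+\|h\|_{\mathcal{H}_{k^\sigma}}\widehat\sigma_{t-1}(x)$, then observe $y_t=h(x_t)$; assume the maximizers exist and that the points $x_1,\dots,x_T$ are pairwise distinct. Let $C_3=\frac{8B}{\log(1+B\sigma^{-2})}$. Then $$R_T\le\|h\|_{\mathcal{H}_{k^\sigma}}\sqrt{TC_3\gamma_T}+2T\big(\|h\|_{\mathcal{H}_{k^\sigma}}+\|g\|_{\mathcal{H}_{\sigma^2\delta}}\big)\sigma,$$ $$r_T\le\|h\|_{\mathcal{H}_{k^\sigma}}\sqrt{\frac{C_3\gamma_T}{T}}+2\big(\|h\|_{\mathcal{H}_{k^\sigma}}+\|g\|_{\mathcal{H}_{\sigma^2\delta}}\big)\sigma.$$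
   Context: $\delta(x,y)=1$ if $x=y$ and $0$ otherwise; $k^\sigma(x,y)=k(x,y)+\sigma^2\delta(x,y)$; $\mathcal{H}_{\sigma^2\delta}$ is the RKHS of the kernel $\sigma^2\delta$. For query points $x_1,\dots,x_t$: $\mathbf{k}_t(x)=[k(x,x_i)]_{i\le t}$, $\mathbf{K}_t=[k(x_i,x_j)]_{i,j\le t}$, $\mathbf{y}_t=[y_1,\dots,y_t]^T$, $\widehat m_t(x)=\mathbf{k}_t(x)^T(\mathbf{K}_t+\sigma^2I)^{-1}\mathbf{y}_t$, $\widehat\sigma_t^2(x)=k(x,x)-\mathbf{k}_t(x)^T(\mathbf{K}_t+\sigma^2I)^{-1}\mathbf{k}_t(x)$, $\widehat m_0\equiv0$, $\widehat\sigma_0^2(x)=k(x,x)$. $x^*\in\arg\max_{\mathcal{X}}f$; $R_T=\sum_{t=1}^T(f(x^* )-f(x_t))$; $r_T=f(x^* )-\max_{t\le T}f(x_t)$; $\gamma_T=\max_{x_1,\dots,x_T\in\mathcal{X}}\frac12\log\det(\mathbf{I}_T+\sigma^{-2}\mathbf{K}_T)$. *)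

theory Defs
  imports "HOL-Analysis.Analysis" "Jordan_Normal_Form.Determinant" "Jordan_Normal_Form.Gauss_Jordan_Elimination"
begin

definition kexp :: "('a \<Rightarrow> 'a \<Rightarrow> real) \<Rightarrow> ('a \<times> real) list \<Rightarrow> 'a \<Rightarrow> real" where
  "kexp k ps x = (\<Sum>(z, a) \<leftarrow> ps. a * k x z)"

definition kgram :: "('a \<Rightarrow> 'a \<Rightarrow> real) \<Rightarrow> ('a \<times> real) list \<Rightarrow> real" where
  "kgram k ps = (\<Sum>(z, a) \<leftarrow> ps. \<Sum>(w, b) \<leftarrow> ps. a * b * k z w)"

definition kdiff :: "('a \<times> real) list \<Rightarrow> ('a \<times> real) list \<Rightarrow> ('a \<times> real) list" where
  "kdiff ps qs = ps @ map (\<lambda>(z, b). (z, - b)) qs"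

definition is_kernel :: "'a set \<Rightarrow> ('a \<Rightarrow> 'a \<Rightarrow> real) \<Rightarrow> bool" where
  "is_kernel X k \<longleftrightarrow> (\<forall>x\<in>X. \<forall>y\<in>X. k x y = k y x) \<and>
     (\<forall>ps. set (map fst ps) \<subseteq> X \<longrightarrow> kgram k ps \<ge> 0)"

definition rkhs_approx :: "'a set \<Rightarrow> ('a \<Rightarrow> 'a \<Rightarrow> real) \<Rightarrow> ('a \<Rightarrow> real) \<Rightarrow> (nat \<Rightarrow> ('a \<times> real) list) \<Rightarrow> bool" where
  "rkhs_approx X k f s \<longleftrightarrow>
     (\<forall>n. set (map fst (s n)) \<subseteq> X) \<and>
     (\<forall>e>0. \<exists>N. \<forall>m\<ge>N. \<forall>n\<ge>N. kgram k (kdiff (s m) (s n)) < e) \<and>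
     (\<forall>x\<in>X. (\<lambda>n. kexp k (s n) x) \<longlonglongrightarrow> f x)"

text \<open>f \<in> H_k (functions are only considered on X).\<close>
definition in_rkhs :: "'a set \<Rightarrow> ('a \<Rightarrow> 'a \<Rightarrow> real) \<Rightarrow> ('a \<Rightarrow> real) \<Rightarrow> bool" where
  "in_rkhs X k f \<longleftrightarrow> (\<exists>s. rkhs_approx X k f s)"

text \<open>RKHS norm: the limit of the pre-RKHS norms along an approximating sequence (this
limit is the same for every approximating sequence; we take the infimum for definiteness).\<close>
definition rkhs_norm :: "'a set \<Rightarrow> ('a \<Rightarrow> 'a \<Rightarrow> real) \<Rightarrow> ('a \<Rightarrow> real) \<Rightarrow> real" where
  "rkhs_norm X k f = Inf {L. \<exists>s. rkhs_approx X k f s \<and> (\<lambda>n. sqrt (kgram k (s n))) \<longlonglongrightarrow> L}"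

definition delta :: "'a \<Rightarrow> 'a \<Rightarrow> real" where
  "delta x y = (if x = y then 1 else 0)"

definition ksig :: "('a \<Rightarrow> 'a \<Rightarrow> real) \<Rightarrow> real \<Rightarrow> 'a \<Rightarrow> 'a \<Rightarrow> real" where
  "ksig k \<sigma> x y = k x y + \<sigma>\<^sup>2 * delta x y"

definition gram_mat :: "('a \<Rightarrow> 'a \<Rightarrow> real) \<Rightarrow> 'a list \<Rightarrow> real mat" where
  "gram_mat k xs = mat (length xs) (length xs) (\<lambda>(i, j). k (xs ! i) (xs ! j))"

definition kvec :: "('a \<Rightarrow> 'a \<Rightarrow> real) \<Rightarrow> 'a list \<Rightarrow> 'a \<Rightarrow> real vec" where
  "kvec k xs x = vec (length xs) (\<lambda>i. k x (xs ! i))"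

definition reg_inv :: "('a \<Rightarrow> 'a \<Rightarrow> real) \<Rightarrow> real \<Rightarrow> 'a list \<Rightarrow> real mat" where
  "reg_inv k \<sigma> xs = the (mat_inverse (gram_mat k xs + \<sigma>\<^sup>2 \<cdot>\<^sub>m 1\<^sub>m (length xs)))"

definition post_mean :: "('a \<Rightarrow> 'a \<Rightarrow> real) \<Rightarrow> real \<Rightarrow> 'a list \<Rightarrow> real list \<Rightarrow> 'a \<Rightarrow> real" where
  "post_mean k \<sigma> xs ys x =
     (if xs = [] then 0 else scalar_prod (kvec k xs x) (reg_inv k \<sigma> xs *\<^sub>v vec (length ys) (\<lambda>i. ys ! i)))"

definition post_var :: "('a \<Rightarrow> 'a \<Rightarrow> real) \<Rightarrow> real \<Rightarrow> 'a list \<Rightarrow> 'a \<Rightarrow> real" where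
  "post_var k \<sigma> xs x =
     (if xs = [] then k x x else k x x - scalar_prod (kvec k xs x) (reg_inv k \<sigma> xs *\<^sub>v kvec k xs x))"

definition max_info_gain :: "'a set \<Rightarrow> ('a \<Rightarrow> 'a \<Rightarrow> real) \<Rightarrow> real \<Rightarrow> nat \<Rightarrow> real" where
  "max_info_gain X k \<sigma> T =
     (SUP xs \<in> {xs. length xs = T \<and> set xs \<subseteq> X}.
        1/2 * ln (det (1\<^sub>m T + (1 / \<sigma>\<^sup>2) \<cdot>\<^sub>m gram_mat k xs)))"

end

theory Submission
  imports Defs
begin

text \<open>
  Write \<beta> for the norm of h = f + g in the RKHS of k + \<sigma>^2 \<delta>. The interpolants of h on
  finite sets have norm at most \<parallel>f\<parallel> + \<parallel>g\<parallel> there, and increasing such sets approximate h, so h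
  lies in that space. On distinct points the Gram matrix of k + \<sigma>^2 \<delta> is K + \<sigma>^2 I, so
  the functional h \<mapsto> h(u) - \<mu>_t(u) is a finite expansion of norm at most
  sqrt (\<sigma>_t(u)^2 + \<sigma>^2), which gives \<bar>h(u) - \<mu>_t(u)\<bar> \<le> \<beta> (\<sigma>_t(u) + \<sigma>). Combined with
  \<bar>g(u)\<bar> \<le> \<parallel>g\<parallel> \<sigma> and the choice of x_t, each step costs at most
  2 \<beta> \<sigma>_{t-1}(x_t) + 2 (\<beta> + \<parallel>g\<parallel>) \<sigma>. Schur complements factor det (I + K_T / \<sigma>^2) into
  the product of the 1 + \<sigma>_{t-1}(x_t)^2 / \<sigma>^2, and concavity of the logarithm bounds the sum
  of the posterior variances by 2 B \<gamma>_T / log (1 + B / \<sigma>^2); Cauchy--Schwarz yields the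
  cumulative bound, and the simple regret is at most the average regret.
\<close>

section \<open>Finite kernel expansions\<close>

definition kinner :: "('a \<Rightarrow> 'a \<Rightarrow> real) \<Rightarrow> ('a \<times> real) list \<Rightarrow> ('a \<times> real) list \<Rightarrow> real" where
  "kinner k p q = (\<Sum>(z, a) \<leftarrow> p. \<Sum>(w, b) \<leftarrow> q. a * b * k z w)"

definition eval_comb :: "('a \<times> real) list \<Rightarrow> ('a \<Rightarrow> real) \<Rightarrow> real" where
  "eval_comb c F = (\<Sum>(z, a) \<leftarrow> c. a * F z)"

definition scale_comb :: "real \<Rightarrow> ('a \<times> real) list \<Rightarrow> ('a \<times> real) list" where
  "scale_comb t q = map (\<lambda>(z, b). (z, t * b)) q"

lemma sum_list_map_eq_sum_nth: "(\<Sum>x\<leftarrow>xs. f x) = (\<Sum>i<length xs. f (xs ! i))"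
  by (simp add: sum_list_sum_nth atLeast0LessThan)

lemma kinner_conv_sum:
  "kinner k p q = (\<Sum>i<length p. \<Sum>j<length q. snd (p!i) * snd (q!j) * k (fst (p!i)) (fst (q!j)))"
  unfolding kinner_def sum_list_map_eq_sum_nth by (simp add: case_prod_unfold)

lemma kexp_conv_sum: "kexp k p x = (\<Sum>i<length p. snd (p!i) * k x (fst (p!i)))"
  unfolding kexp_def sum_list_map_eq_sum_nth by (simp add: case_prod_unfold)

lemma eval_comb_conv_sum: "eval_comb c F = (\<Sum>i<length c. snd (c!i) * F (fst (c!i)))"
  unfolding eval_comb_def sum_list_map_eq_sum_nth by (simp add: case_prod_unfold)

lemma kgram_eq_kinner: "kgram k p = kinner k p p"
  unfolding kgram_def kinner_def ..

lemma kinner_append_left: "kinner k (p @ q) r = kinner k p r + kinner k q r"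
  unfolding kinner_def by simp

lemma kinner_append_right: "kinner k r (p @ q) = kinner k r p + kinner k r q"
  unfolding kinner_def by (induct r) auto

lemma length_scale_comb [simp]: "length (scale_comb t q) = length q"
  unfolding scale_comb_def by simp

lemma nth_scale_comb [simp]: "i < length q \<Longrightarrow> scale_comb t q ! i = (fst (q!i), t * snd (q!i))"
  unfolding scale_comb_def by (simp add: case_prod_unfold)

lemma map_fst_scale_comb [simp]: "map fst (scale_comb t q) = map fst q"
  unfolding scale_comb_def by (induct q) auto

lemma kinner_scale_left: "kinner k (scale_comb t q) r = t * kinner k q r"
  unfolding kinner_conv_sum by (simp add: sum_distrib_left mult.assoc)

lemma kinner_scale_right: "kinner k r (scale_comb t q) = t * kinner k r q"
  unfolding kinner_conv_sum by (simp add: sum_distrib_left algebra_simps)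

lemma kdiff_eq_scale_comb: "kdiff p q = p @ scale_comb (-1) q"
  unfolding kdiff_def scale_comb_def by simp

lemma kinner_commute:
  assumes "is_kernel X k" "set (map fst p) \<subseteq> X" "set (map fst q) \<subseteq> X"
  shows "kinner k p q = kinner k q p"
proof -
  have "k (fst (p!i)) (fst (q!j)) = k (fst (q!j)) (fst (p!i))" if "i < length p" "j < length q" for i j
  proof -
    have "fst (p!i) \<in> X" "fst (q!j) \<in> X" using assms(2,3) that by (auto simp: set_conv_nth)
    then show ?thesis using assms(1) unfolding is_kernel_def by blast
  qed
  then show ?thesis unfolding kinner_conv_sum
    by (subst sum.swap) (intro sum.cong refl, simp add: mult.commute)
qed

lemma kexp_eq_kinner: "kexp k p x = kinner k [(x, 1)] p"
  unfolding kexp_def kinner_def by simp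

lemma eval_comb_kexp: "eval_comb c (kexp k p) = kinner k c p"
  unfolding eval_comb_def kexp_def kinner_def
  by (simp add: case_prod_unfold sum_list_const_mult mult.assoc)

lemma eval_comb_add: "eval_comb c (\<lambda>u. F u + G u) = eval_comb c F + eval_comb c G"
  unfolding eval_comb_def by (simp add: case_prod_unfold distrib_left sum_list_addf)

lemma eval_comb_cong: "(\<And>z. z \<in> set (map fst c) \<Longrightarrow> F z = G z) \<Longrightarrow> eval_comb c F = eval_comb c G"
  unfolding eval_comb_def by (induct c) auto

lemma kgram_add_kernel: "kgram (\<lambda>u v. K1 u v + K2 u v) c = kgram K1 c + kgram K2 c"
  unfolding kgram_eq_kinner kinner_conv_sum by (simp add: distrib_left sum.distrib)

lemma kgram_scale_kernel: "kgram (\<lambda>u v. a * K u v) c = a * kgram K c"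
  unfolding kgram_eq_kinner kinner_conv_sum by (simp add: sum_distrib_left mult_ac)

lemma kgram_single: "kgram k [(x, 1)] = k x x"
  unfolding kgram_def by simp

lemma kgram_nonneg: "is_kernel X k \<Longrightarrow> set (map fst p) \<subseteq> X \<Longrightarrow> kgram k p \<ge> 0"
  unfolding is_kernel_def by auto

lemma kgram_kdiff:
  assumes "is_kernel X k" "set (map fst p) \<subseteq> X" "set (map fst q) \<subseteq> X"
  shows "kgram k (kdiff p q) = kgram k p - 2 * kinner k p q + kgram k q"
  using kinner_commute[OF assms(1,3,2)]
  unfolding kgram_eq_kinner kdiff_eq_scale_comb kinner_append_left kinner_append_right
    kinner_scale_left kinner_scale_right by simp

lemma kgram_kdiff_commute:
  assumes "is_kernel X k" "set (map fst p) \<subseteq> X" "set (map fst q) \<subseteq> X"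
  shows "kgram k (kdiff p q) = kgram k (kdiff q p)"
  using kgram_kdiff[OF assms] kgram_kdiff[OF assms(1,3,2)] kinner_commute[OF assms] by simp

lemma kinner_square_le:
  assumes kernel: "is_kernel X k" and p: "set (map fst p) \<subseteq> X" and q: "set (map fst q) \<subseteq> X"
  shows "(kinner k p q)\<^sup>2 \<le> kgram k p * kgram k q"
proof -
  have quadratic: "0 \<le> kgram k p - 2 * t * kinner k p q + t\<^sup>2 * kgram k q" for t
  proof -
    have tq: "set (map fst (scale_comb t q)) \<subseteq> X" using q by simp
    have "0 \<le> kgram k (kdiff p (scale_comb t q))"
      by (rule kgram_nonneg[OF kernel]) (use p q in \<open>auto simp: kdiff_eq_scale_comb\<close>)
    also have "\<dots> = kgram k p - 2 * t * kinner k p q + t\<^sup>2 * kgram k q"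
      unfolding kgram_kdiff[OF kernel p tq]
      by (simp add: kgram_eq_kinner kinner_scale_left kinner_scale_right power2_eq_square)
    finally show ?thesis .
  qed
  show ?thesis
  proof (cases "kgram k q = 0")
    case True
    have "kinner k p q = 0"
    proof (rule ccontr)
      assume "kinner k p q \<noteq> 0"
      then show False
        using quadratic[of "(kgram k p + 1) / (2 * kinner k p q)"] True by simp
    qed
    then show ?thesis using True by simp
  next
    case False
    then have q_pos: "kgram k q > 0" using kgram_nonneg[OF kernel q] by simp
    have "0 \<le> kgram k p - (kinner k p q)\<^sup>2 / kgram k q"
      using quadratic[of "kinner k p q / kgram k q"] q_pos by (simp add: power2_eq_square field_simps)
    then show ?thesis using q_pos by (simp add: field_simps)
  qed
qed

lemma abs_kinner_le:
  assumes "is_kernel X k" "set (map fst p) \<subseteq> X" "set (map fst q) \<subseteq> X"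
  shows "\<bar>kinner k p q\<bar> \<le> sqrt (kgram k p) * sqrt (kgram k q)"
  using real_sqrt_le_mono[OF kinner_square_le[OF assms]] by (simp add: real_sqrt_mult)

lemma sqrt_kgram_triangle:
  assumes kernel: "is_kernel X k" and p: "set (map fst p) \<subseteq> X" and q: "set (map fst q) \<subseteq> X"
  shows "sqrt (kgram k p) \<le> sqrt (kgram k (kdiff p q)) + sqrt (kgram k q)"
proof -
  define d where "d = kdiff p q"
  have d: "set (map fst d) \<subseteq> X" unfolding d_def kdiff_eq_scale_comb using p q by auto
  have "kinner k d q = kinner k p q - kgram k q"
    unfolding d_def kdiff_eq_scale_comb kinner_append_left kinner_scale_left kgram_eq_kinner by simp
  then have "kgram k p = kgram k d + 2 * kinner k d q + kgram k q"
    unfolding d_def kgram_kdiff[OF kernel p q] by simp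
  also have "\<dots> \<le> (sqrt (kgram k d) + sqrt (kgram k q))\<^sup>2"
    using abs_kinner_le[OF kernel d q] kgram_nonneg[OF kernel d] kgram_nonneg[OF kernel q]
    unfolding power2_sum by simp
  finally have "sqrt (kgram k p) \<le> sqrt ((sqrt (kgram k d) + sqrt (kgram k q))\<^sup>2)"
    by (rule real_sqrt_le_mono)
  then show ?thesis using kgram_nonneg[OF kernel d] kgram_nonneg[OF kernel q] d_def by simp
qed

lemma abs_sqrt_kgram_diff_le:
  assumes "is_kernel X k" "set (map fst p) \<subseteq> X" "set (map fst q) \<subseteq> X"
  shows "\<bar>sqrt (kgram k p) - sqrt (kgram k q)\<bar> \<le> sqrt (kgram k (kdiff p q))"
  using sqrt_kgram_triangle[OF assms] sqrt_kgram_triangle[OF assms(1,3,2)] kgram_kdiff_commute[OF assms]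
  by (simp add: abs_le_iff)

section \<open>Evaluation functionals are bounded by the RKHS norm\<close>

lemma rkhs_approx_norm_convergent:
  assumes kernel: "is_kernel X k" and approx: "rkhs_approx X k f s"
  shows "convergent (\<lambda>n. sqrt (kgram k (s n)))"
proof -
  have centres: "\<And>n. set (map fst (s n)) \<subseteq> X" using approx unfolding rkhs_approx_def by auto
  have "Cauchy (\<lambda>n. sqrt (kgram k (s n)))"
  proof (rule metric_CauchyI)
    fix e :: real assume e: "e > 0"
    then obtain N where N: "\<forall>m\<ge>N. \<forall>n\<ge>N. kgram k (kdiff (s m) (s n)) < e\<^sup>2"
      using approx unfolding rkhs_approx_def by (meson zero_less_power)
    have "dist (sqrt (kgram k (s m))) (sqrt (kgram k (s n))) < e" if "m \<ge> N" "n \<ge> N" for m n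
    proof -
      have "sqrt (kgram k (kdiff (s m) (s n))) < sqrt (e\<^sup>2)"
        using N that by (intro real_sqrt_less_mono) auto
      then show ?thesis
        using abs_sqrt_kgram_diff_le[OF kernel centres centres, of m n] e
        unfolding dist_real_def by simp
    qed
    then show "\<exists>M. \<forall>m\<ge>M. \<forall>n\<ge>M. dist (sqrt (kgram k (s m))) (sqrt (kgram k (s n))) < e"
      by blast
  qed
  then show ?thesis by (simp add: Cauchy_convergent_iff)
qed

lemma rkhs_approx_eval_comb_le:
  assumes kernel: "is_kernel X k" and approx: "rkhs_approx X k f s"
    and lim: "(\<lambda>n. sqrt (kgram k (s n))) \<longlonglongrightarrow> L" and c: "set (map fst c) \<subseteq> X"
  shows "\<bar>eval_comb c f\<bar> \<le> sqrt (kgram k c) * L"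
proof -
  have centres: "\<And>n. set (map fst (s n)) \<subseteq> X"
    and pointwise: "\<forall>x\<in>X. (\<lambda>n. kexp k (s n) x) \<longlonglongrightarrow> f x"
    using approx unfolding rkhs_approx_def by auto
  have "fst (c!i) \<in> X" if "i < length c" for i using c that by (auto simp: set_conv_nth)
  then have "(\<lambda>n. eval_comb c (kexp k (s n))) \<longlonglongrightarrow> eval_comb c f"
    unfolding eval_comb_conv_sum by (intro tendsto_sum tendsto_mult_left) (use pointwise in auto)
  moreover have "\<bar>eval_comb c (kexp k (s n))\<bar> \<le> sqrt (kgram k c) * sqrt (kgram k (s n))" for n
    unfolding eval_comb_kexp using abs_kinner_le[OF kernel c centres] .
  ultimately show ?thesis
    by (intro LIMSEQ_le[OF tendsto_rabs tendsto_mult_left[OF lim]]) auto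
qed

context
  fixes X :: "'a set" and k :: "'a \<Rightarrow> 'a \<Rightarrow> real" and f :: "'a \<Rightarrow> real"
  assumes kernel: "is_kernel X k" and member: "in_rkhs X k f"
begin

private abbreviation (input) norm_limits :: "real set" where
  "norm_limits \<equiv> {L. \<exists>s. rkhs_approx X k f s \<and> (\<lambda>n. sqrt (kgram k (s n))) \<longlonglongrightarrow> L}"

private lemma norm_limits_nonempty: "norm_limits \<noteq> {}"
proof -
  obtain s where s: "rkhs_approx X k f s" using member unfolding in_rkhs_def by auto
  then obtain L where "(\<lambda>n. sqrt (kgram k (s n))) \<longlonglongrightarrow> L"
    using rkhs_approx_norm_convergent[OF kernel s] unfolding convergent_def by auto
  with s show ?thesis by auto
qed

lemma rkhs_norm_nonneg: "rkhs_norm X k f \<ge> 0"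
  unfolding rkhs_norm_def
proof (rule cInf_greatest[OF norm_limits_nonempty])
  fix L assume "L \<in> norm_limits"
  then obtain s where s: "rkhs_approx X k f s" and lim: "(\<lambda>n. sqrt (kgram k (s n))) \<longlonglongrightarrow> L"
    by auto
  have "kgram k (s n) \<ge> 0" for n using s kgram_nonneg[OF kernel] unfolding rkhs_approx_def by auto
  then show "0 \<le> L" by (intro LIMSEQ_le_const[OF lim]) auto
qed

lemma abs_eval_comb_le_rkhs_norm:
  assumes c: "set (map fst c) \<subseteq> X"
  shows "\<bar>eval_comb c f\<bar> \<le> rkhs_norm X k f * sqrt (kgram k c)"
proof -
  have bound: "\<bar>eval_comb c f\<bar> \<le> sqrt (kgram k c) * L" if "L \<in> norm_limits" for L
    using that rkhs_approx_eval_comb_le[OF kernel _ _ c] by auto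
  show ?thesis
  proof (cases "kgram k c = 0")
    case True
    then show ?thesis using bound norm_limits_nonempty by fastforce
  next
    case False
    then have pos: "sqrt (kgram k c) > 0" using kgram_nonneg[OF kernel c] by simp
    have "\<bar>eval_comb c f\<bar> / sqrt (kgram k c) \<le> rkhs_norm X k f"
      unfolding rkhs_norm_def
      by (rule cInf_greatest[OF norm_limits_nonempty]) (use bound pos in \<open>auto simp: divide_le_eq mult.commute\<close>)
    then show ?thesis using pos by (simp add: divide_le_eq mult.commute)
  qed
qed

lemma abs_le_rkhs_norm: "x \<in> X \<Longrightarrow> \<bar>f x\<bar> \<le> rkhs_norm X k f * sqrt (k x x)"
  using abs_eval_comb_le_rkhs_norm[of "[(x, 1)]"] by (simp add: eval_comb_def kgram_single)

end

section \<open>The noise kernel\<close>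

lemma kgram_delta_nonneg: "kgram delta c \<ge> 0"
proof -
  define m where "m = length c"
  define z where "z i = fst (c!i)" for i
  define a where "a i = snd (c!i)" for i
  define G where "G y = (\<Sum>j<m. if z j = y then a j else 0)" for y
  have "kgram delta c = (\<Sum>i<m. \<Sum>j<m. a i * a j * delta (z i) (z j))"
    unfolding kgram_eq_kinner kinner_conv_sum m_def z_def a_def ..
  also have "\<dots> = (\<Sum>i<m. a i * G (z i))"
    unfolding G_def by (intro sum.cong refl) (auto simp: sum_distrib_left delta_def intro!: sum.cong)
  \<comment> \<open>grouping equal centres turns the form into a sum of squares\<close>
  also have "\<dots> = (\<Sum>y\<in>z ` {..<m}. \<Sum>i\<in>{i\<in>{..<m}. z i = y}. a i * G (z i))"
    by (rule sum.image_gen) simp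
  also have "\<dots> = (\<Sum>y\<in>z ` {..<m}. G y * G y)"
  proof (intro sum.cong refl)
    fix y
    have "(\<Sum>i\<in>{i\<in>{..<m}. z i = y}. a i * G (z i)) = G y * (\<Sum>i\<in>{i\<in>{..<m}. z i = y}. a i)"
      by (simp add: sum_distrib_left mult_ac)
    also have "(\<Sum>i\<in>{i\<in>{..<m}. z i = y}. a i) = G y"
      unfolding G_def by (rule sum.inter_filter) simp
    finally show "(\<Sum>i\<in>{i\<in>{..<m}. z i = y}. a i * G (z i)) = G y * G y" .
  qed
  also have "\<dots> \<ge> 0" by (intro sum_nonneg) simp
  finally show ?thesis .
qed

lemma delta_commute: "delta u v = delta v u"
  unfolding delta_def by auto

lemma is_kernel_delta: "is_kernel X delta"
  unfolding is_kernel_def using kgram_delta_nonneg delta_commute by auto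

lemma is_kernel_scale: "is_kernel X k \<Longrightarrow> c \<ge> 0 \<Longrightarrow> is_kernel X (\<lambda>u v. c * k u v)"
  unfolding is_kernel_def kgram_scale_kernel by auto

lemma is_kernel_noise: "is_kernel X (\<lambda>u v. c\<^sup>2 * delta u v)"
  by (simp add: is_kernel_scale is_kernel_delta)

lemma ksig_eq: "ksig k \<sigma> = (\<lambda>u v. k u v + \<sigma>\<^sup>2 * delta u v)"
  unfolding ksig_def ..

lemma is_kernel_ksig: "is_kernel X k \<Longrightarrow> is_kernel X (ksig k \<sigma>)"
  unfolding is_kernel_def ksig_eq kgram_add_kernel kgram_scale_kernel
  using kgram_delta_nonneg delta_commute by (auto intro!: add_nonneg_nonneg mult_nonneg_nonneg)

lemma abs_le_noise_rkhs_norm: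
  assumes "\<sigma> > 0" "in_rkhs X (\<lambda>u v. \<sigma>\<^sup>2 * delta u v) g" "u \<in> X"
  shows "\<bar>g u\<bar> \<le> rkhs_norm X (\<lambda>u v. \<sigma>\<^sup>2 * delta u v) g * \<sigma>"
  using abs_le_rkhs_norm[OF is_kernel_noise assms(2,3)] assms(1) by (simp add: delta_def)

section \<open>The regularised Gram matrix and the posterior\<close>

definition reg_gram :: "('a \<Rightarrow> 'a \<Rightarrow> real) \<Rightarrow> real \<Rightarrow> 'a list \<Rightarrow> real mat" where
  "reg_gram k \<sigma> xs = gram_mat k xs + \<sigma>\<^sup>2 \<cdot>\<^sub>m 1\<^sub>m (length xs)"

definition post_weights :: "('a \<Rightarrow> 'a \<Rightarrow> real) \<Rightarrow> real \<Rightarrow> 'a list \<Rightarrow> 'a \<Rightarrow> real vec" where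
  "post_weights k \<sigma> xs u = reg_inv k \<sigma> xs *\<^sub>v kvec k xs u"

definition vec_comb :: "'a list \<Rightarrow> real vec \<Rightarrow> ('a \<times> real) list" where
  "vec_comb xs v = map (\<lambda>i. (xs!i, v$i)) [0..<length xs]"

text \<open>Evaluating a function on the residual expansion gives the error of the posterior mean
  at u, so the norm of the residual controls that error.\<close>

definition residual_comb :: "('a \<Rightarrow> 'a \<Rightarrow> real) \<Rightarrow> real \<Rightarrow> 'a list \<Rightarrow> 'a \<Rightarrow> ('a \<times> real) list" where
  "residual_comb k \<sigma> xs u = (u, 1) # scale_comb (-1) (vec_comb xs (post_weights k \<sigma> xs u))"

lemma gram_mat_carrier [simp]: "gram_mat k xs \<in> carrier_mat (length xs) (length xs)"
  unfolding gram_mat_def by simp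

lemma kvec_carrier [simp]: "kvec k xs x \<in> carrier_vec (length xs)"
  unfolding kvec_def by simp

lemma dim_kvec [simp]: "dim_vec (kvec k xs x) = length xs"
  unfolding kvec_def by simp

lemma index_kvec [simp]: "i < length xs \<Longrightarrow> kvec k xs x $ i = k x (xs!i)"
  unfolding kvec_def by simp

lemma reg_gram_carrier [simp]: "reg_gram k \<sigma> xs \<in> carrier_mat (length xs) (length xs)"
  unfolding reg_gram_def by simp

lemma dim_reg_gram [simp]:
  "dim_row (reg_gram k \<sigma> xs) = length xs" "dim_col (reg_gram k \<sigma> xs) = length xs"
  unfolding reg_gram_def by simp_all

lemma index_reg_gram:
  "i < length xs \<Longrightarrow> j < length xs \<Longrightarrow>
     reg_gram k \<sigma> xs $$ (i,j) = k (xs!i) (xs!j) + (if i = j then \<sigma>\<^sup>2 else 0)"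
  unfolding reg_gram_def gram_mat_def by simp

lemma reg_gram_Nil: "reg_gram k \<sigma> [] = 1\<^sub>m 0"
  by (rule eq_matI) auto

lemma length_vec_comb [simp]: "length (vec_comb xs v) = length xs"
  unfolding vec_comb_def by simp

lemma nth_vec_comb [simp]: "i < length xs \<Longrightarrow> vec_comb xs v ! i = (xs!i, v$i)"
  unfolding vec_comb_def by simp

lemma map_fst_vec_comb [simp]: "map fst (vec_comb xs v) = xs"
  unfolding vec_comb_def by (rule nth_equalityI) auto

lemma scalar_prod_mult_mat_vec_conv_sum:
  assumes "(M :: real mat) \<in> carrier_mat n n" "v \<in> carrier_vec n"
  shows "v \<bullet> (M *\<^sub>v v) = (\<Sum>i<n. \<Sum>j<n. v$i * v$j * M$$(i,j))"
  using assms by (auto simp: scalar_prod_def atLeast0LessThan sum_distrib_left mult_ac intro!: sum.cong)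

lemma scalar_prod_self_nonneg: "(v :: real vec) \<bullet> v \<ge> 0"
  unfolding scalar_prod_def by (auto intro: sum_nonneg)

lemma scalar_prod_self_eq_0:
  fixes v :: "real vec"
  assumes "v \<in> carrier_vec n" "v \<bullet> v = 0"
  shows "v = 0\<^sub>v n"
proof -
  have "\<forall>i\<in>{0..<dim_vec v}. v$i * v$i = 0"
    using assms(2) unfolding scalar_prod_def by (subst sum_nonneg_eq_0_iff[symmetric]) auto
  then show ?thesis using assms(1) by (intro eq_vecI) auto
qed

lemma quadratic_form_gram_mat:
  "v \<in> carrier_vec (length xs) \<Longrightarrow> v \<bullet> (gram_mat k xs *\<^sub>v v) = kgram k (vec_comb xs v)"
  unfolding scalar_prod_mult_mat_vec_conv_sum[OF gram_mat_carrier] kgram_eq_kinner kinner_conv_sum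
  by (auto simp: gram_mat_def intro!: sum.cong)

lemma quadratic_form_reg_gram:
  assumes "v \<in> carrier_vec (length xs)"
  shows "v \<bullet> (reg_gram k \<sigma> xs *\<^sub>v v) = kgram k (vec_comb xs v) + \<sigma>\<^sup>2 * (v \<bullet> v)"
proof -
  have "reg_gram k \<sigma> xs *\<^sub>v v = gram_mat k xs *\<^sub>v v + \<sigma>\<^sup>2 \<cdot>\<^sub>v v"
    unfolding reg_gram_def using assms by (subst add_mult_distrib_mat_vec) auto
  moreover have "v \<bullet> (gram_mat k xs *\<^sub>v v + \<sigma>\<^sup>2 \<cdot>\<^sub>v v) = v \<bullet> (gram_mat k xs *\<^sub>v v) + v \<bullet> (\<sigma>\<^sup>2 \<cdot>\<^sub>v v)"
    using assms mult_mat_vec_carrier[OF gram_mat_carrier assms]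
    by (intro scalar_prod_add_distrib[of _ "length xs"]) auto
  ultimately show ?thesis using assms by (simp add: quadratic_form_gram_mat)
qed

lemma quadratic_form_reg_gram_ge:
  "is_kernel X k \<Longrightarrow> set xs \<subseteq> X \<Longrightarrow> v \<in> carrier_vec (length xs) \<Longrightarrow>
     v \<bullet> (reg_gram k \<sigma> xs *\<^sub>v v) \<ge> \<sigma>\<^sup>2 * (v \<bullet> v)"
  using kgram_nonneg[of X k "vec_comb xs v"] by (simp add: quadratic_form_reg_gram)

lemma det_reg_gram_nonzero:
  assumes kernel: "is_kernel X k" and xs: "set xs \<subseteq> X" and \<sigma>: "\<sigma> > 0"
  shows "det (reg_gram k \<sigma> xs) \<noteq> 0"
proof
  assume "det (reg_gram k \<sigma> xs) = 0"
  then obtain v where v: "v \<in> carrier_vec (length xs)" "v \<noteq> 0\<^sub>v (length xs)"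
    and null: "reg_gram k \<sigma> xs *\<^sub>v v = 0\<^sub>v (length xs)"
    using det_0_iff_vec_prod_zero_field[OF reg_gram_carrier] by blast
  have "\<sigma>\<^sup>2 * (v \<bullet> v) \<le> 0"
    using quadratic_form_reg_gram_ge[OF kernel xs v(1), of \<sigma>] null v(1) by simp
  then have "v \<bullet> v = 0" using \<sigma> scalar_prod_self_nonneg[of v] by (simp add: mult_le_0_iff)
  with v show False using scalar_prod_self_eq_0 by blast
qed

lemma reg_inv_inverse:
  assumes "is_kernel X k" "set xs \<subseteq> X" "\<sigma> > 0"
  shows "reg_gram k \<sigma> xs * reg_inv k \<sigma> xs = 1\<^sub>m (length xs)"
    and "reg_inv k \<sigma> xs * reg_gram k \<sigma> xs = 1\<^sub>m (length xs)"
    and "reg_inv k \<sigma> xs \<in> carrier_mat (length xs) (length xs)"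
proof -
  have "reg_gram k \<sigma> xs \<in> Units (ring_mat TYPE(real) (length xs) ())"
    by (rule det_non_zero_imp_unit[OF reg_gram_carrier det_reg_gram_nonzero[OF assms]])
  then have "mat_inverse (reg_gram k \<sigma> xs) \<noteq> None"
    using mat_inverse(1)[OF reg_gram_carrier] by metis
  then obtain R where R: "mat_inverse (reg_gram k \<sigma> xs) = Some R" by auto
  have "reg_inv k \<sigma> xs = R" unfolding reg_inv_def using R by (simp add: reg_gram_def)
  then show "reg_gram k \<sigma> xs * reg_inv k \<sigma> xs = 1\<^sub>m (length xs)"
    "reg_inv k \<sigma> xs * reg_gram k \<sigma> xs = 1\<^sub>m (length xs)"
    "reg_inv k \<sigma> xs \<in> carrier_mat (length xs) (length xs)"
    using mat_inverse(2)[OF reg_gram_carrier R] by auto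
qed

context
  fixes X :: "'a set" and k :: "'a \<Rightarrow> 'a \<Rightarrow> real" and \<sigma> :: real and xs :: "'a list"
  assumes kernel: "is_kernel X k" and xs: "set xs \<subseteq> X" and \<sigma>: "\<sigma> > 0"
begin

private abbreviation (input) "n \<equiv> length xs"
private abbreviation (input) "A \<equiv> reg_gram k \<sigma> xs"
private abbreviation (input) "R \<equiv> reg_inv k \<sigma> xs"
private abbreviation (input) "\<alpha> \<equiv> post_weights k \<sigma> xs"

private lemmas inverse = reg_inv_inverse[OF kernel xs \<sigma>]

lemma transpose_reg_gram: "transpose_mat A = A"
proof (rule eq_matI)
  fix i j assume "i < dim_row A" "j < dim_col A"
  then have "i < n" "j < n" by auto
  moreover have "xs!i \<in> X" "xs!j \<in> X" using xs \<open>i < n\<close> \<open>j < n\<close> by auto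
  ultimately show "transpose_mat A $$ (i,j) = A $$ (i,j)"
    using kernel unfolding is_kernel_def by (auto simp: index_reg_gram)
qed auto

lemma transpose_reg_inv: "transpose_mat R = R"
proof -
  have "transpose_mat R * A = 1\<^sub>m n"
    using transpose_mult[OF reg_gram_carrier[of k \<sigma> xs] inverse(3)] inverse(1) transpose_reg_gram by simp
  then have "transpose_mat R = transpose_mat R * (A * R)"
    using inverse(1,3) by simp
  also have "\<dots> = (transpose_mat R * A) * R"
    using inverse(3) by (simp add: assoc_mult_mat[of _ n n _ n _ n])
  also have "\<dots> = R" using \<open>transpose_mat R * A = 1\<^sub>m n\<close> inverse(3) by simp
  finally show ?thesis .
qed

lemma post_weights_carrier [simp]: "\<alpha> u \<in> carrier_vec n"
  unfolding post_weights_def by (rule mult_mat_vec_carrier[OF inverse(3) kvec_carrier])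

lemma dim_post_weights [simp]: "dim_vec (\<alpha> u) = n"
  using carrier_vecD[OF post_weights_carrier] .

lemma reg_gram_mult_post_weights: "A *\<^sub>v \<alpha> u = kvec k xs u"
proof -
  have "A *\<^sub>v \<alpha> u = (A * R) *\<^sub>v kvec k xs u"
    unfolding post_weights_def using inverse(3) by (simp add: assoc_mult_mat_vec[of _ n n _ n])
  then show ?thesis using inverse(1) by simp
qed

lemma post_mean_eq:
  assumes "length ys = n"
  shows "post_mean k \<sigma> xs ys u = \<alpha> u \<bullet> vec n (\<lambda>i. ys ! i)"
proof -
  have "kvec k xs u \<bullet> (R *\<^sub>v vec n (\<lambda>i. ys ! i)) = (transpose_mat R *\<^sub>v kvec k xs u) \<bullet> vec n (\<lambda>i. ys ! i)"
    using transpose_vec_mult_scalar[OF inverse(3)] by simp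
  then show ?thesis
    using assms unfolding post_mean_def post_weights_def transpose_reg_inv
    by (auto simp: scalar_prod_def)
qed

lemma post_var_eq: "post_var k \<sigma> xs u = k u u - kvec k xs u \<bullet> \<alpha> u"
  unfolding post_var_def post_weights_def by (simp add: scalar_prod_def)

lemma kvec_scalar_prod_post_weights:
  "kvec k xs u \<bullet> \<alpha> u = kgram k (vec_comb xs (\<alpha> u)) + \<sigma>\<^sup>2 * (\<alpha> u \<bullet> \<alpha> u)"
  using quadratic_form_reg_gram[OF post_weights_carrier[of u], of k \<sigma>]
  unfolding reg_gram_mult_post_weights by (simp add: comm_scalar_prod[of _ n])

lemma post_var_le: "post_var k \<sigma> xs u \<le> k u u"
  unfolding post_var_eq kvec_scalar_prod_post_weights
  using kgram_nonneg[OF kernel, of "vec_comb xs (\<alpha> u)"] xs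
    mult_nonneg_nonneg[OF zero_le_power2 scalar_prod_self_nonneg, of \<sigma> "\<alpha> u"]
  by simp

section \<open>Confidence bound for the posterior mean\<close>

lemma residual_comb_centres: "u \<in> X \<Longrightarrow> set (map fst (residual_comb k \<sigma> xs u)) \<subseteq> X"
  unfolding residual_comb_def using xs by auto

lemma eval_comb_residual_comb:
  "eval_comb (residual_comb k \<sigma> xs u) F = F u - \<alpha> u \<bullet> vec n (\<lambda>i. F (xs ! i))"
proof -
  have "eval_comb (scale_comb (-1) (vec_comb xs (\<alpha> u))) F = - (\<Sum>i<n. \<alpha> u $ i * F (xs!i))"
    unfolding eval_comb_conv_sum by (simp add: sum_negf[symmetric])
  then show ?thesis
    unfolding residual_comb_def using post_weights_carrier[of u]
    by (simp add: eval_comb_def scalar_prod_def atLeast0LessThan)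
qed

lemma kgram_residual_comb:
  assumes other: "is_kernel X K" and u: "u \<in> X"
  shows "kgram K (residual_comb k \<sigma> xs u)
           = K u u - 2 * kexp K (vec_comb xs (\<alpha> u)) u + kgram K (vec_comb xs (\<alpha> u))"
proof -
  have point: "set (map fst [(u, 1::real)]) \<subseteq> X" and nodes: "set (map fst (vec_comb xs (\<alpha> u))) \<subseteq> X"
    using u xs by auto
  have split: "residual_comb k \<sigma> xs u = [(u, 1)] @ scale_comb (-1) (vec_comb xs (\<alpha> u))"
    unfolding residual_comb_def by simp
  show ?thesis
    using kinner_commute[OF other point nodes]
    unfolding split kgram_eq_kinner kinner_append_left kinner_append_right kinner_scale_left kinner_scale_right
    by (simp add: kexp_eq_kinner kinner_def)
qed

lemma kexp_vec_comb_post_weights: "kexp k (vec_comb xs (\<alpha> u)) u = kvec k xs u \<bullet> \<alpha> u"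
  unfolding kexp_conv_sum using post_weights_carrier[of u]
  by (simp add: scalar_prod_def atLeast0LessThan mult.commute)

lemma kgram_kernel_residual_comb:
  "u \<in> X \<Longrightarrow> kgram k (residual_comb k \<sigma> xs u) = post_var k \<sigma> xs u - \<sigma>\<^sup>2 * (\<alpha> u \<bullet> \<alpha> u)"
  unfolding kgram_residual_comb[OF kernel] kexp_vec_comb_post_weights
    post_var_eq kvec_scalar_prod_post_weights
  by simp

lemma post_var_nonneg: "u \<in> X \<Longrightarrow> post_var k \<sigma> xs u \<ge> 0"
  using kgram_nonneg[OF kernel residual_comb_centres] kgram_kernel_residual_comb
    mult_nonneg_nonneg[OF zero_le_power2 scalar_prod_self_nonneg, of \<sigma> "\<alpha> u"]
  by fastforce

context
  assumes distinct: "distinct xs"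
begin

lemma reg_inv_diag_le:
  assumes j: "j < n"
  shows "\<sigma>\<^sup>2 * R $$ (j,j) \<le> 1"
proof -
  define w where "w = R *\<^sub>v unit_vec n j"
  have w: "w \<in> carrier_vec n" unfolding w_def using inverse(3) by simp
  have "A *\<^sub>v w = (A * R) *\<^sub>v unit_vec n j"
    unfolding w_def using inverse(3) by (simp add: assoc_mult_mat_vec[of _ n n _ n])
  then have "A *\<^sub>v w = unit_vec n j" using inverse(1) by simp
  moreover have wj: "w $ j = R $$ (j,j)" unfolding w_def using j inverse(3) by simp
  ultimately have "w \<bullet> (A *\<^sub>v w) = R $$ (j,j)" using j w by simp
  then have "\<sigma>\<^sup>2 * (w \<bullet> w) \<le> R $$ (j,j)" using quadratic_form_reg_gram_ge[OF kernel xs w, of \<sigma>] by simp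
  moreover have "w $ j * w $ j \<le> w \<bullet> w"
    unfolding scalar_prod_def using j w by (intro member_le_sum) auto
  ultimately have "(\<sigma>\<^sup>2 * R $$ (j,j)) * R $$ (j,j) \<le> 1 * R $$ (j,j)"
    using wj mult_left_mono[of "w $ j * w $ j" "w \<bullet> w" "\<sigma>\<^sup>2"] by (simp add: mult_ac)
  show ?thesis
  proof (cases "R $$ (j,j) > 0")
    case True
    then show ?thesis using \<open>(\<sigma>\<^sup>2 * R $$ (j,j)) * R $$ (j,j) \<le> 1 * R $$ (j,j)\<close>
      by (rule mult_right_le_imp_le[rotated])
  next
    case False
    then show ?thesis by (smt (verit) mult_nonneg_nonpos zero_le_power2)
  qed
qed

lemma post_weights_at_node:
  assumes j: "j < n"
  shows "\<alpha> (xs ! j) $ j = 1 - \<sigma>\<^sup>2 * R $$ (j,j)"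
proof -
  have sym: "k (xs!l) (xs!j) = k (xs!j) (xs!l)" if "l < n" for l
    using kernel xs j that unfolding is_kernel_def by (meson nth_mem subsetD)
  have "1 = (R * A) $$ (j,j)" using inverse(2) j by simp
  also have "\<dots> = (\<Sum>l<n. R $$ (j,l) * (k (xs!j) (xs!l) + (if l = j then \<sigma>\<^sup>2 else 0)))"
    using j inverse(3) sym by (auto simp: scalar_prod_def atLeast0LessThan index_reg_gram intro!: sum.cong)
  also have "\<dots> = (\<Sum>l<n. R $$ (j,l) * k (xs!j) (xs!l)) + (\<Sum>l<n. if l = j then \<sigma>\<^sup>2 * R $$ (j,j) else 0)"
    by (subst sum.distrib[symmetric]) (auto intro!: sum.cong simp: algebra_simps)
  also have "\<dots> = (\<Sum>l<n. R $$ (j,l) * k (xs!j) (xs!l)) + \<sigma>\<^sup>2 * R $$ (j,j)"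
    using j by simp
  also have "(\<Sum>l<n. R $$ (j,l) * k (xs!j) (xs!l)) = \<alpha> (xs ! j) $ j"
    unfolding post_weights_def using j inverse(3) by (simp add: scalar_prod_def atLeast0LessThan)
  finally show ?thesis by simp
qed

lemma kgram_noise_residual_comb:
  assumes u: "u \<in> X"
  shows "kgram (\<lambda>a b. \<sigma>\<^sup>2 * delta a b) (residual_comb k \<sigma> xs u)
           = \<sigma>\<^sup>2 * (1 - 2 * (\<Sum>i<n. \<alpha> u $ i * delta u (xs ! i)) + \<alpha> u \<bullet> \<alpha> u)"
proof -
  have "(\<Sum>j<n. \<alpha> u $ i * \<alpha> u $ j * delta (xs!i) (xs!j)) = \<alpha> u $ i * \<alpha> u $ i" if "i < n" for i
  proof -
    have "(\<Sum>j<n. \<alpha> u $ i * \<alpha> u $ j * delta (xs!i) (xs!j))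
        = (\<Sum>j<n. if j = i then \<alpha> u $ i * \<alpha> u $ i else 0)"
      using that distinct by (intro sum.cong refl) (auto simp: delta_def nth_eq_iff_index_eq)
    then show ?thesis using that by simp
  qed
  then have "kgram delta (vec_comb xs (\<alpha> u)) = \<alpha> u \<bullet> \<alpha> u"
    using post_weights_carrier[of u]
    by (simp add: kgram_eq_kinner kinner_conv_sum scalar_prod_def atLeast0LessThan)
  moreover have "kexp delta (vec_comb xs (\<alpha> u)) u = (\<Sum>i<n. \<alpha> u $ i * delta u (xs ! i))"
    unfolding kexp_conv_sum by simp
  ultimately show ?thesis
    unfolding kgram_scale_kernel kgram_residual_comb[OF is_kernel_delta u]
    by (simp add: delta_def algebra_simps)
qed

lemma kgram_ksig_residual_comb_le:
  assumes u: "u \<in> X"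
  shows "kgram (ksig k \<sigma>) (residual_comb k \<sigma> xs u) \<le> post_var k \<sigma> xs u + \<sigma>\<^sup>2"
proof -
  have "(\<Sum>i<n. \<alpha> u $ i * delta u (xs ! i)) \<ge> 0"
  proof (cases "u \<in> set xs")
    case True
    then obtain j where j: "j < n" "u = xs ! j" by (auto simp: in_set_conv_nth)
    have "(\<Sum>i<n. \<alpha> u $ i * delta u (xs ! i)) = (\<Sum>i<n. if i = j then \<alpha> u $ j else 0)"
      using j distinct by (intro sum.cong refl) (auto simp: delta_def nth_eq_iff_index_eq)
    also have "\<dots> = 1 - \<sigma>\<^sup>2 * R $$ (j,j)" using j post_weights_at_node by simp
    finally show ?thesis using reg_inv_diag_le[OF j(1)] by simp
  next
    case False
    then have "delta u (xs ! i) = 0" if "i < n" for i using that by (auto simp: delta_def)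
    then show ?thesis by simp
  qed
  then show ?thesis
    unfolding ksig_eq kgram_add_kernel kgram_noise_residual_comb[OF u]
      kgram_kernel_residual_comb[OF u]
    by (simp add: algebra_simps)
qed

end

end

lemma abs_sub_post_mean_le:
  assumes kernel: "is_kernel X k" and \<sigma>: "\<sigma> > 0" and h: "in_rkhs X (ksig k \<sigma>) h"
    and xs: "set xs \<subseteq> X" and distinct: "distinct xs" and u: "u \<in> X"
  shows "\<bar>h u - post_mean k \<sigma> xs (map h xs) u\<bar>
           \<le> rkhs_norm X (ksig k \<sigma>) h * (sqrt (post_var k \<sigma> xs u) + \<sigma>)"
proof -
  let ?r = "residual_comb k \<sigma> xs u"
  have "vec (length xs) (\<lambda>i. map h xs ! i) = vec (length xs) (\<lambda>i. h (xs ! i))" by auto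
  then have "h u - post_mean k \<sigma> xs (map h xs) u = eval_comb ?r h"
    by (simp add: eval_comb_residual_comb[OF kernel xs \<sigma>] post_mean_eq[OF kernel xs \<sigma>])
  also have "\<bar>\<dots>\<bar> \<le> rkhs_norm X (ksig k \<sigma>) h * sqrt (kgram (ksig k \<sigma>) ?r)"
    by (rule abs_eval_comb_le_rkhs_norm[OF is_kernel_ksig[OF kernel] h residual_comb_centres[OF kernel xs \<sigma> u]])
  also have "sqrt (kgram (ksig k \<sigma>) ?r) \<le> sqrt (post_var k \<sigma> xs u) + \<sigma>"
  proof -
    have "sqrt (kgram (ksig k \<sigma>) ?r) \<le> sqrt (post_var k \<sigma> xs u + \<sigma>\<^sup>2)"
      using kgram_ksig_residual_comb_le[OF kernel xs \<sigma> distinct u] by (rule real_sqrt_le_mono)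
    also have "\<dots> \<le> sqrt (post_var k \<sigma> xs u) + sqrt (\<sigma>\<^sup>2)"
      using post_var_nonneg[OF kernel xs \<sigma> u] by (intro sqrt_add_le_add_sqrt) auto
    finally show ?thesis using \<sigma> by simp
  qed
  then have "rkhs_norm X (ksig k \<sigma>) h * sqrt (kgram (ksig k \<sigma>) ?r)
               \<le> rkhs_norm X (ksig k \<sigma>) h * (sqrt (post_var k \<sigma> xs u) + \<sigma>)"
    using rkhs_norm_nonneg[OF is_kernel_ksig[OF kernel] h] by (rule mult_left_mono)
  finally show ?thesis .
qed

section \<open>The information gain of the chosen points\<close>

lemma det_four_block_mat_schur:
  fixes A :: "'a::field mat"
  assumes A: "A \<in> carrier_mat n n" and R: "R \<in> carrier_mat n n" and AR: "A * R = 1\<^sub>m n"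
    and B: "B \<in> carrier_mat n m" and C: "C \<in> carrier_mat m n" and D: "D \<in> carrier_mat m m"
  shows "det (four_block_mat A B C D) = det A * det (D - C * (R * B))"
proof -
  define W where "W = R * B"
  define S where "S = D - C * W"
  have W: "W \<in> carrier_mat n m" unfolding W_def using R B by simp
  have S: "S \<in> carrier_mat m m" unfolding S_def using C D W by (metis minus_carrier_mat mult_carrier_mat)
  have "four_block_mat A (0\<^sub>m n m) C (1\<^sub>m m) * four_block_mat (1\<^sub>m n) W (0\<^sub>m m n) S
      = four_block_mat (A * 1\<^sub>m n + 0\<^sub>m n m * 0\<^sub>m m n) (A * W + 0\<^sub>m n m * S)
          (C * 1\<^sub>m n + 1\<^sub>m m * 0\<^sub>m m n) (C * W + 1\<^sub>m m * S)"
    by (rule mult_four_block_mat) (use A C W S in auto)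
  also have "\<dots> = four_block_mat A B C D"
  proof -
    have "A * W = (A * R) * B" unfolding W_def using A R B by simp
    then have "A * W = B" using AR B by simp
    moreover have "C * W + S = D"
      unfolding S_def by (rule eq_matI) (use C W D in auto)
    ultimately show ?thesis using A B C W S by simp
  qed
  finally have "det (four_block_mat A B C D)
      = det (four_block_mat A (0\<^sub>m n m) C (1\<^sub>m m)) * det (four_block_mat (1\<^sub>m n) W (0\<^sub>m m n) S)"
    by (metis det_mult four_block_carrier_mat A C W S one_carrier_mat zero_carrier_mat)
  also have "\<dots> = det A * det S"
    using det_four_block_mat_upper_right_zero[OF A refl C] det_four_block_mat_lower_left_zero[OF _ W refl S]
    by simp
  finally show ?thesis unfolding S_def W_def .
qed

lemma det_reg_gram_snoc:
  assumes kernel: "is_kernel X k" and xs: "set xs \<subseteq> X" and u: "u \<in> X" and \<sigma>: "\<sigma> > 0"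
  shows "det (reg_gram k \<sigma> (xs @ [u])) = det (reg_gram k \<sigma> xs) * (\<sigma>\<^sup>2 + post_var k \<sigma> xs u)"
proof -
  define n where "n = length xs"
  define B where "B = mat n 1 (\<lambda>(i,j). k (xs!i) u)"
  define C where "C = mat 1 n (\<lambda>(i,j). k u (xs!j))"
  define D where "D = mat 1 1 (\<lambda>_. k u u + \<sigma>\<^sup>2)"
  note inverse = reg_inv_inverse[OF kernel xs \<sigma>, folded n_def]
  have A: "reg_gram k \<sigma> xs \<in> carrier_mat n n" unfolding n_def by simp
  have B: "B \<in> carrier_mat n 1" and C: "C \<in> carrier_mat 1 n" and D: "D \<in> carrier_mat 1 1"
    unfolding B_def C_def D_def by auto
  have sym: "k (xs!i) u = k u (xs!i)" if "i < n" for i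
    using kernel xs u that unfolding is_kernel_def n_def by (meson nth_mem subsetD)
  have blocks: "reg_gram k \<sigma> (xs @ [u]) = four_block_mat (reg_gram k \<sigma> xs) B C D"
  proof (rule eq_matI)
    fix i j assume "i < dim_row (four_block_mat (reg_gram k \<sigma> xs) B C D)"
      "j < dim_col (four_block_mat (reg_gram k \<sigma> xs) B C D)"
    then have "i < n + 1" "j < n + 1" using A D by auto
    then show "reg_gram k \<sigma> (xs @ [u]) $$ (i, j) = four_block_mat (reg_gram k \<sigma> xs) B C D $$ (i, j)"
      using A B C D by (auto simp: index_reg_gram nth_append n_def B_def C_def D_def)
  qed (use A D n_def in auto)
  have "col B 0 = kvec k xs u"
    by (rule eq_vecI) (auto simp: B_def n_def sym)
  then have "col (reg_inv k \<sigma> xs * B) 0 = post_weights k \<sigma> xs u"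
    using inverse(3) B unfolding post_weights_def by simp
  moreover have "row C 0 = kvec k xs u"
    by (rule eq_vecI) (auto simp: C_def n_def)
  ultimately have schur: "(D - C * (reg_inv k \<sigma> xs * B)) $$ (0,0) = \<sigma>\<^sup>2 + post_var k \<sigma> xs u"
    using B C D inverse(3) by (simp add: post_var_eq[OF kernel xs \<sigma>] D_def)
  have "D - C * (reg_inv k \<sigma> xs * B) \<in> carrier_mat 1 1"
    using B C D inverse(3) by (metis minus_carrier_mat mult_carrier_mat)
  then show ?thesis
    unfolding blocks det_four_block_mat_schur[OF A inverse(3,1) B C D] det_single schur[symmetric]
    by (simp add: det_single)
qed

lemma det_reg_gram_eq_prod:
  assumes kernel: "is_kernel X k" and ys: "set ys \<subseteq> X" and \<sigma>: "\<sigma> > 0"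
  shows "det (reg_gram k \<sigma> ys) = (\<Prod>i<length ys. \<sigma>\<^sup>2 + post_var k \<sigma> (take i ys) (ys ! i))"
  using ys
proof (induction ys rule: rev_induct)
  case Nil
  then show ?case by (simp add: reg_gram_Nil)
next
  case (snoc y ys)
  then have "set ys \<subseteq> X" "y \<in> X" by auto
  then show ?case
    using snoc.IH det_reg_gram_snoc[OF kernel _ _ \<sigma>]
    by (auto simp: prod.lessThan_Suc nth_append intro!: prod.cong)
qed

lemma ln_det_info_gain_eq_sum:
  assumes kernel: "is_kernel X k" and ys: "set ys \<subseteq> X" and \<sigma>: "\<sigma> > 0"
  shows "ln (det (1\<^sub>m (length ys) + (1 / \<sigma>\<^sup>2) \<cdot>\<^sub>m gram_mat k ys))
           = (\<Sum>i<length ys. ln (1 + post_var k \<sigma> (take i ys) (ys ! i) / \<sigma>\<^sup>2))"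
proof -
  have pos: "1 + post_var k \<sigma> (take i ys) (ys ! i) / \<sigma>\<^sup>2 > 0" if "i < length ys" for i
  proof -
    have "post_var k \<sigma> (take i ys) (ys ! i) \<ge> 0"
      using post_var_nonneg[OF kernel _ \<sigma>] ys that by (meson in_set_takeD nth_mem subset_code(1))
    then show ?thesis by (simp add: add_pos_nonneg)
  qed
  have "1\<^sub>m (length ys) + (1 / \<sigma>\<^sup>2) \<cdot>\<^sub>m gram_mat k ys = (1 / \<sigma>\<^sup>2) \<cdot>\<^sub>m reg_gram k \<sigma> ys"
    by (rule eq_matI) (use \<sigma> in \<open>auto simp: index_reg_gram gram_mat_def field_simps\<close>)
  also have "det \<dots> = (\<Prod>i<length ys. 1 / \<sigma>\<^sup>2) * (\<Prod>i<length ys. \<sigma>\<^sup>2 + post_var k \<sigma> (take i ys) (ys ! i))"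
    by (simp add: det_reg_gram_eq_prod[OF kernel ys \<sigma>])
  also have "\<dots> = (\<Prod>i<length ys. 1 + post_var k \<sigma> (take i ys) (ys ! i) / \<sigma>\<^sup>2)"
    unfolding prod.distrib[symmetric] using \<sigma> by (intro prod.cong refl) (simp add: field_simps)
  also have "ln \<dots> = (\<Sum>i<length ys. ln (1 + post_var k \<sigma> (take i ys) (ys ! i) / \<sigma>\<^sup>2))"
    using pos by (intro ln_prod) (auto simp: less_imp_neq[symmetric])
  finally show ?thesis .
qed

text \<open>The chord of the concave function x \<mapsto> ln (1 + x / \<sigma>^2) on [0, B] lies below its graph.\<close>

lemma le_ln_1_plus_chord:
  fixes s B \<sigma> :: real
  assumes \<sigma>: "\<sigma> > 0" and B: "B > 0" and s: "0 \<le> s" "s \<le> B"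
  shows "s \<le> (B / ln (1 + B / \<sigma>\<^sup>2)) * ln (1 + s / \<sigma>\<^sup>2)"
proof -
  define Z where "Z = B / \<sigma>\<^sup>2"
  define l where "l = s / B"
  have Z: "Z > 0" unfolding Z_def using \<sigma> B by simp
  have l: "0 \<le> l" "l \<le> 1" unfolding l_def using s B by auto
  have "exp (l * ln (1 + Z)) \<le> (1 - l) * exp 0 + l * exp (ln (1 + Z))"
    using convex_onD[OF exp_convex, of l 0 "ln (1 + Z)"] l by simp
  then have "exp (l * ln (1 + Z)) \<le> 1 + l * Z" using Z by (simp add: algebra_simps)
  moreover have "1 + l * Z > 0" using Z l by (simp add: add_pos_nonneg)
  ultimately have "l * ln (1 + Z) \<le> ln (1 + l * Z)"
    by (metis ln_exp ln_le_cancel_iff exp_gt_zero)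
  moreover have "l * Z = s / \<sigma>\<^sup>2" unfolding l_def Z_def using B by simp
  ultimately have "s / B * ln (1 + Z) \<le> ln (1 + s / \<sigma>\<^sup>2)" unfolding l_def by simp
  then have "s * ln (1 + Z) \<le> B * ln (1 + s / \<sigma>\<^sup>2)" using B by (simp add: field_simps)
  moreover have "ln (1 + Z) > 0" using Z by simp
  ultimately show ?thesis unfolding Z_def by (simp add: field_simps)
qed

lemma post_var_le_bound:
  assumes "is_kernel X k" "set xs \<subseteq> X" "\<sigma> > 0" "u \<in> X" "ksig k \<sigma> u u \<le> B"
  shows "post_var k \<sigma> xs u \<le> B"
proof -
  have "k u u + \<sigma>\<^sup>2 \<le> B" using assms(5) by (simp add: ksig_def delta_def)
  then show ?thesis using post_var_le[OF assms(1-3), of u] zero_le_power2[of \<sigma>] by linarith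
qed

lemma info_gain_le_max_info_gain:
  assumes kernel: "is_kernel X k" and \<sigma>: "\<sigma> > 0" and diag: "\<forall>u\<in>X. ksig k \<sigma> u u \<le> B"
    and ys: "set ys \<subseteq> X" "length ys = T"
  shows "1/2 * ln (det (1\<^sub>m T + (1 / \<sigma>\<^sup>2) \<cdot>\<^sub>m gram_mat k ys)) \<le> max_info_gain X k \<sigma> T"
proof -
  let ?M = "1/2 * (T * ln (1 + max B 0 / \<sigma>\<^sup>2))"
  have bound: "1/2 * ln (det (1\<^sub>m T + (1 / \<sigma>\<^sup>2) \<cdot>\<^sub>m gram_mat k zs)) \<le> ?M"
    if zs: "set zs \<subseteq> X" "length zs = T" for zs
  proof -
    have "ln (1 + post_var k \<sigma> (take i zs) (zs ! i) / \<sigma>\<^sup>2) \<le> ln (1 + max B 0 / \<sigma>\<^sup>2)"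
      if "i < T" for i
    proof -
      have "set (take i zs) \<subseteq> X" "zs ! i \<in> X" using zs that by (auto dest: in_set_takeD)
      then have "0 \<le> post_var k \<sigma> (take i zs) (zs ! i)" "post_var k \<sigma> (take i zs) (zs ! i) \<le> max B 0"
        using post_var_nonneg[OF kernel _ \<sigma>] post_var_le_bound[OF kernel _ \<sigma> _ bspec[OF diag]]
        by (auto intro: le_max_iff_disj[THEN iffD2, OF disjI1])
      then show ?thesis using \<sigma> by (simp add: divide_right_mono add_pos_nonneg)
    qed
    then have "(\<Sum>i<T. ln (1 + post_var k \<sigma> (take i zs) (zs ! i) / \<sigma>\<^sup>2)) \<le> (\<Sum>i<T. ln (1 + max B 0 / \<sigma>\<^sup>2))"
      by (intro sum_mono) simp
    then show ?thesis using ln_det_info_gain_eq_sum[OF kernel zs(1) \<sigma>] zs(2) by simp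
  qed
  have "bdd_above ((\<lambda>zs. 1/2 * ln (det (1\<^sub>m T + (1 / \<sigma>\<^sup>2) \<cdot>\<^sub>m gram_mat k zs)))
          ` {zs. length zs = T \<and> set zs \<subseteq> X})"
  proof (rule bdd_aboveI2)
    fix zs assume "zs \<in> {zs. length zs = T \<and> set zs \<subseteq> X}"
    then show "1/2 * ln (det (1\<^sub>m T + (1 / \<sigma>\<^sup>2) \<cdot>\<^sub>m gram_mat k zs)) \<le> ?M" using bound by simp
  qed
  then show ?thesis unfolding max_info_gain_def using ys by (intro cSUP_upper) simp_all
qed

lemma sum_post_var_le_info_gain:
  assumes kernel: "is_kernel X k" and \<sigma>: "\<sigma> > 0" and B: "B > 0"
    and diag: "\<forall>u\<in>X. ksig k \<sigma> u u \<le> B" and ys: "set ys \<subseteq> X"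
  shows "(\<Sum>i<length ys. post_var k \<sigma> (take i ys) (ys ! i))
           \<le> B / ln (1 + B / \<sigma>\<^sup>2) * (2 * max_info_gain X k \<sigma> (length ys))"
proof -
  let ?c = "B / ln (1 + B / \<sigma>\<^sup>2)"
  have "post_var k \<sigma> (take i ys) (ys ! i) \<le> ?c * ln (1 + post_var k \<sigma> (take i ys) (ys ! i) / \<sigma>\<^sup>2)"
    if "i < length ys" for i
  proof -
    have "set (take i ys) \<subseteq> X" "ys ! i \<in> X" using ys that by (auto dest: in_set_takeD)
    then show ?thesis
      using le_ln_1_plus_chord[OF \<sigma> B post_var_nonneg[OF kernel _ \<sigma>]
          post_var_le_bound[OF kernel _ \<sigma> _ bspec[OF diag]]] by simp
  qed
  then have "(\<Sum>i<length ys. post_var k \<sigma> (take i ys) (ys ! i))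
               \<le> ?c * ln (det (1\<^sub>m (length ys) + (1 / \<sigma>\<^sup>2) \<cdot>\<^sub>m gram_mat k ys))"
    unfolding ln_det_info_gain_eq_sum[OF kernel ys \<sigma>] sum_distrib_left by (auto intro: sum_mono)
  also have "\<dots> \<le> ?c * (2 * max_info_gain X k \<sigma> (length ys))"
    using info_gain_le_max_info_gain[OF kernel \<sigma> diag ys refl] B \<sigma>
    by (intro mult_left_mono) auto
  finally show ?thesis .
qed

section \<open>The sum of the two functions lies in the RKHS of the noisy kernel\<close>

definition interp_comb :: "('a \<Rightarrow> 'a \<Rightarrow> real) \<Rightarrow> real \<Rightarrow> ('a \<Rightarrow> real) \<Rightarrow> 'a list \<Rightarrow> ('a \<times> real) list" where
  "interp_comb k \<sigma> F zs = vec_comb zs (reg_inv k \<sigma> zs *\<^sub>v vec (length zs) (\<lambda>i. F (zs ! i)))"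

definition interp_set :: "('a \<Rightarrow> 'a \<Rightarrow> real) \<Rightarrow> real \<Rightarrow> ('a \<Rightarrow> real) \<Rightarrow> 'a set \<Rightarrow> ('a \<times> real) list" where
  "interp_set k \<sigma> F S = interp_comb k \<sigma> F (SOME zs. set zs = S \<and> distinct zs)"

lemma map_fst_interp_comb [simp]: "map fst (interp_comb k \<sigma> F zs) = zs"
  unfolding interp_comb_def by simp

lemma set_map_fst_interp_set: "finite S \<Longrightarrow> set (map fst (interp_set k \<sigma> F S)) = S"
  unfolding interp_set_def using someI_ex[OF finite_distinct_list] by auto

text \<open>On distinct points the Gram matrix of the noisy kernel is the regularised Gram matrix
  of the original one, so the expansion interpolates.\<close>

lemma kexp_interp_comb:
  assumes kernel: "is_kernel X k" and zs: "set zs \<subseteq> X" and \<sigma>: "\<sigma> > 0" and distinct: "distinct zs"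
    and j: "j < length zs"
  shows "kexp (ksig k \<sigma>) (interp_comb k \<sigma> F zs) (zs ! j) = F (zs ! j)"
proof -
  define n where "n = length zs"
  define c where "c = reg_inv k \<sigma> zs *\<^sub>v vec n (\<lambda>i. F (zs ! i))"
  note inverse = reg_inv_inverse[OF kernel zs \<sigma>, folded n_def]
  have c: "c \<in> carrier_vec n" unfolding c_def using inverse(3) by simp
  have "reg_gram k \<sigma> zs *\<^sub>v c = (reg_gram k \<sigma> zs * reg_inv k \<sigma> zs) *\<^sub>v vec n (\<lambda>i. F (zs ! i))"
    unfolding c_def n_def using inverse(3) by (simp add: assoc_mult_mat_vec[of _ n n _ n] n_def)
  then have solves: "reg_gram k \<sigma> zs *\<^sub>v c = vec n (\<lambda>i. F (zs ! i))" using inverse(1) by simp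
  have "kexp (ksig k \<sigma>) (interp_comb k \<sigma> F zs) (zs ! j) = (\<Sum>i<n. c$i * ksig k \<sigma> (zs!j) (zs!i))"
    unfolding interp_comb_def kexp_conv_sum by (simp add: n_def c_def)
  also have "\<dots> = (\<Sum>i<n. reg_gram k \<sigma> zs $$ (j,i) * c$i)"
    using j distinct
    by (intro sum.cong refl) (auto simp: index_reg_gram n_def ksig_def delta_def nth_eq_iff_index_eq)
  also have "\<dots> = (reg_gram k \<sigma> zs *\<^sub>v c) $ j"
    using j c by (simp add: n_def scalar_prod_def atLeast0LessThan)
  also have "\<dots> = F (zs ! j)" using solves j unfolding n_def by simp
  finally show ?thesis .
qed

context
  fixes X :: "'a set" and k :: "'a \<Rightarrow> 'a \<Rightarrow> real" and \<sigma> :: real and F :: "'a \<Rightarrow> real"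
  assumes kernel: "is_kernel X k" and \<sigma>: "\<sigma> > 0"
begin

private abbreviation (input) "I \<equiv> interp_set k \<sigma> F"
private abbreviation (input) "K \<equiv> ksig k \<sigma>"

private lemma centres_interp_set: "finite S \<Longrightarrow> S \<subseteq> X \<Longrightarrow> set (map fst (I S)) \<subseteq> X"
  using set_map_fst_interp_set[of S k \<sigma> F] by simp

lemma kexp_interp_set:
  assumes S: "finite S" "S \<subseteq> X" and x: "x \<in> S"
  shows "kexp K (I S) x = F x"
proof -
  define zs where "zs = (SOME zs. set zs = S \<and> distinct zs)"
  have zs: "set zs = S" "distinct zs"
    unfolding zs_def using someI_ex[OF finite_distinct_list[OF S(1)]] by auto
  then obtain j where "j < length zs" "zs ! j = x" using x by (metis in_set_conv_nth)
  then show ?thesis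
    using kexp_interp_comb[OF kernel _ \<sigma> zs(2)] zs S unfolding interp_set_def zs_def[symmetric] by auto
qed

lemma kinner_interp_set:
  "finite S \<Longrightarrow> S \<subseteq> X \<Longrightarrow> set (map fst q) \<subseteq> S \<Longrightarrow> kinner K q (I S) = eval_comb q F"
  unfolding eval_comb_kexp[symmetric] by (rule eval_comb_cong) (use kexp_interp_set in auto)

lemma kgram_interp_set:
  assumes "finite S" "S \<subseteq> X"
  shows "kgram K (I S) = eval_comb (I S) F"
  unfolding kgram_eq_kinner
  by (rule kinner_interp_set[OF assms]) (use set_map_fst_interp_set[OF assms(1)] in simp)

lemma kgram_kdiff_interp_set:
  assumes T: "finite T" "T \<subseteq> X" and ST: "S \<subseteq> T"
  shows "kgram K (kdiff (I T) (I S)) = kgram K (I T) - kgram K (I S)"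
proof -
  have S: "finite S" "S \<subseteq> X" using T ST finite_subset by auto
  have "kinner K (I T) (I S) = kinner K (I S) (I T)"
    by (rule kinner_commute[OF is_kernel_ksig[OF kernel] centres_interp_set[OF T] centres_interp_set[OF S]])
  also have "\<dots> = kgram K (I S)"
    using kinner_interp_set[OF T] kgram_interp_set[OF S] set_map_fst_interp_set[OF S(1)] ST by simp
  finally show ?thesis
    using kgram_kdiff[OF is_kernel_ksig[OF kernel] centres_interp_set[OF T] centres_interp_set[OF S]]
    by simp
qed

lemma kgram_interp_set_mono:
  assumes "finite T" "T \<subseteq> X" "S \<subseteq> T"
  shows "kgram K (I S) \<le> kgram K (I T)"
proof -
  have "finite S" "S \<subseteq> X" using assms finite_subset by auto
  then have "set (map fst (kdiff (I T) (I S))) \<subseteq> X"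
    using centres_interp_set assms by (auto simp: kdiff_eq_scale_comb)
  then have "0 \<le> kgram K (kdiff (I T) (I S))" by (rule kgram_nonneg[OF is_kernel_ksig[OF kernel]])
  then show ?thesis using kgram_kdiff_interp_set[OF assms] by simp
qed

context
  assumes bounded: "bdd_above ((\<lambda>S. kgram (ksig k \<sigma>) (interp_set k \<sigma> F S)) ` {S. finite S \<and> S \<subseteq> X})"
begin

private abbreviation (input) "norms \<equiv> (\<lambda>S. kgram K (I S)) ` {S. finite S \<and> S \<subseteq> X}"

text \<open>The interpolants along an increasing sequence of finite sets whose interpolant norms
  approach their supremum form an approximating sequence for the function.\<close>

private definition near :: "nat \<Rightarrow> 'a set" where
  "near n = (SOME S. finite S \<and> S \<subseteq> X \<and> Sup norms - inverse (Suc n) < kgram K (I S))"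

private definition nested :: "nat \<Rightarrow> 'a set" where
  "nested n = (\<Union>i\<le>n. near i)"

private lemma kgram_interp_le_Sup: "finite S \<Longrightarrow> S \<subseteq> X \<Longrightarrow> kgram K (I S) \<le> Sup norms"
  by (rule cSup_upper[OF _ bounded]) auto

private lemma near: "finite (near n) \<and> near n \<subseteq> X \<and> Sup norms - inverse (Suc n) < kgram K (I (near n))"
proof -
  have "norms \<noteq> {}" by blast
  moreover have "Sup norms - inverse (Suc n) < Sup norms" by simp
  ultimately obtain v where "v \<in> norms" "Sup norms - inverse (Suc n) < v"
    using less_cSup_iff[OF _ bounded] by blast
  then have "\<exists>S. finite S \<and> S \<subseteq> X \<and> Sup norms - inverse (Suc n) < kgram K (I S)" by auto
  then show ?thesis unfolding near_def by (rule someI_ex)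
qed

private lemma nested: "finite (nested n)" "nested n \<subseteq> X"
  unfolding nested_def using near by auto

private lemma kgram_kdiff_interp_nested_lt:
  assumes S: "finite S" "S \<subseteq> X" "nested n \<subseteq> S"
  shows "kgram K (kdiff (I S) (I (nested n))) < inverse (Suc n)"
proof -
  have "kgram K (I (near n)) \<le> kgram K (I (nested n))"
    by (rule kgram_interp_set_mono[OF nested]) (auto simp: nested_def)
  then show ?thesis
    using kgram_kdiff_interp_set[OF S] kgram_interp_le_Sup[OF S(1,2)] near[of n] by simp
qed

private lemma abs_kexp_interp_nested_sub_le:
  assumes x: "x \<in> X"
  shows "\<bar>kexp K (I (nested n)) x - F x\<bar> \<le> sqrt (K x x) * sqrt (inverse (Suc n))"
proof -
  define W where "W = insert x (nested n)"
  have W: "finite W" "W \<subseteq> X" "nested n \<subseteq> W" unfolding W_def using nested x by auto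
  have point: "set (map fst [(x, 1::real)]) \<subseteq> X" using x by simp
  have diff: "set (map fst (kdiff (I W) (I (nested n)))) \<subseteq> X"
    using set_map_fst_interp_set[of W] set_map_fst_interp_set[of "nested n"] W nested
    by (auto simp: kdiff_eq_scale_comb)
  have "F x - kexp K (I (nested n)) x = kinner K [(x, 1)] (kdiff (I W) (I (nested n)))"
    using kexp_interp_set[OF W(1,2)] unfolding W_def
    by (simp add: kdiff_eq_scale_comb kinner_append_right kinner_scale_right kexp_eq_kinner)
  also have "\<bar>\<dots>\<bar> \<le> sqrt (K x x) * sqrt (kgram K (kdiff (I W) (I (nested n))))"
    using abs_kinner_le[OF is_kernel_ksig[OF kernel] point diff] by (simp add: kgram_single)
  also have "\<dots> \<le> sqrt (K x x) * sqrt (inverse (Suc n))"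
    using kgram_kdiff_interp_nested_lt[OF W] kgram_nonneg[OF is_kernel_ksig[OF kernel] point]
    by (intro mult_left_mono real_sqrt_le_mono) (auto simp: kgram_single)
  finally show ?thesis by (simp add: abs_minus_commute)
qed

lemma in_rkhs_ksig_if_bdd_interp: "in_rkhs X K F"
  unfolding in_rkhs_def rkhs_approx_def
proof (intro exI[of _ "\<lambda>n. I (nested n)"] conjI allI impI ballI)
  show "set (map fst (I (nested n))) \<subseteq> X" for n
    using set_map_fst_interp_set[OF nested(1)] nested(2) by simp
next
  fix e :: real assume "e > 0"
  then obtain N where N: "inverse (real (Suc N)) < e" using reals_Archimedean by blast
  have ordered: "kgram K (kdiff (I (nested m)) (I (nested n))) < e" if "n \<ge> N" "n \<le> m" for m n
  proof -
    have "nested n \<subseteq> nested m" unfolding nested_def using \<open>n \<le> m\<close> by (intro UN_mono) auto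
    then have "kgram K (kdiff (I (nested m)) (I (nested n))) < inverse (Suc n)"
      by (rule kgram_kdiff_interp_nested_lt[OF nested])
    moreover have "inverse (real (Suc n)) \<le> inverse (real (Suc N))"
      using \<open>n \<ge> N\<close> by (simp add: le_imp_inverse_le)
    ultimately show ?thesis using N by linarith
  qed
  have "kgram K (kdiff (I (nested m)) (I (nested n))) < e" if "m \<ge> N" "n \<ge> N" for m n
  proof (cases "n \<le> m")
    case False
    have centres: "set (map fst (I (nested i))) \<subseteq> X" for i
      using set_map_fst_interp_set[OF nested(1)] nested(2) by simp
    have "kgram K (kdiff (I (nested m)) (I (nested n))) = kgram K (kdiff (I (nested n)) (I (nested m)))"
      by (rule kgram_kdiff_commute[OF is_kernel_ksig[OF kernel] centres centres])
    then show ?thesis using ordered[of m n] False \<open>m \<ge> N\<close> by simp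
  qed (rule ordered[OF \<open>n \<ge> N\<close>])
  then show "\<exists>N. \<forall>m\<ge>N. \<forall>n\<ge>N. kgram K (kdiff (I (nested m)) (I (nested n))) < e" by auto
next
  fix x assume x: "x \<in> X"
  have "(\<lambda>n. sqrt (inverse (real (Suc n)))) \<longlonglongrightarrow> sqrt 0"
    by (rule tendsto_real_sqrt[OF LIMSEQ_inverse_real_of_nat])
  then have lim: "(\<lambda>n. sqrt (K x x) * sqrt (inverse (real (Suc n)))) \<longlonglongrightarrow> 0"
    using tendsto_mult_left by fastforce
  have "\<forall>n. norm (kexp K (I (nested n)) x - F x) \<le> sqrt (K x x) * sqrt (inverse (real (Suc n)))"
    using abs_kexp_interp_nested_sub_le[OF x] by simp
  then have "(\<lambda>n. kexp K (I (nested n)) x - F x) \<longlonglongrightarrow> 0"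
    by (rule Lim_null_comparison[OF always_eventually]) (rule lim)
  then show "(\<lambda>n. kexp K (I (nested n)) x) \<longlonglongrightarrow> F x"
    by (simp add: LIM_zero_iff)
qed

end

end

lemma kgram_interp_set_add_le:
  assumes kernel: "is_kernel X k" and \<sigma>: "\<sigma> > 0"
    and f: "in_rkhs X k f" and g: "in_rkhs X (\<lambda>u v. \<sigma>\<^sup>2 * delta u v) g"
    and S: "finite S" "S \<subseteq> X"
  shows "kgram (ksig k \<sigma>) (interp_set k \<sigma> (\<lambda>u. f u + g u) S)
           \<le> (rkhs_norm X k f + rkhs_norm X (\<lambda>u v. \<sigma>\<^sup>2 * delta u v) g)\<^sup>2"
proof -
  define p where "p = interp_set k \<sigma> (\<lambda>u. f u + g u) S"
  define a where "a = rkhs_norm X k f"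
  define b where "b = rkhs_norm X (\<lambda>u v. \<sigma>\<^sup>2 * delta u v) g"
  define V where "V = kgram (ksig k \<sigma>) p"
  have p: "set (map fst p) \<subseteq> X" unfolding p_def using set_map_fst_interp_set[OF S(1)] S(2) by simp
  have a: "a \<ge> 0" and b: "b \<ge> 0"
    unfolding a_def b_def using rkhs_norm_nonneg[OF kernel f] rkhs_norm_nonneg[OF is_kernel_noise g] .
  have kp: "kgram k p \<ge> 0" and np: "kgram (\<lambda>u v. \<sigma>\<^sup>2 * delta u v) p \<ge> 0"
    using kgram_nonneg[OF kernel p] kgram_nonneg[OF is_kernel_noise p] .
  have V_split: "V = kgram k p + kgram (\<lambda>u v. \<sigma>\<^sup>2 * delta u v) p"
    unfolding V_def ksig_eq kgram_add_kernel ..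
  \<comment> \<open>the interpolant reproduces f + g on its own centres\<close>
  have "V = eval_comb p f + eval_comb p g"
    unfolding V_def p_def kgram_interp_set[OF kernel \<sigma> S] eval_comb_add ..
  also have "\<dots> \<le> a * sqrt (kgram k p) + b * sqrt (kgram (\<lambda>u v. \<sigma>\<^sup>2 * delta u v) p)"
    using abs_eval_comb_le_rkhs_norm[OF kernel f p] abs_eval_comb_le_rkhs_norm[OF is_kernel_noise g p]
    unfolding a_def b_def by linarith
  also have "\<dots> \<le> (a + b) * sqrt V"
    unfolding V_split distrib_right using a b kp np
    by (intro add_mono mult_left_mono real_sqrt_le_mono) auto
  finally have le: "V \<le> (a + b) * sqrt V" .
  have V: "V \<ge> 0" using kp np V_split by simp
  have "sqrt V \<le> a + b"
  proof (cases "V = 0")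
    case False
    then have "sqrt V > 0" using V by simp
    moreover have "sqrt V * sqrt V \<le> (a + b) * sqrt V" using le V by simp
    ultimately show ?thesis by (meson mult_right_le_imp_le)
  qed (use a b in simp)
  then show ?thesis
    using kp np V_split power_mono[of "sqrt V" "a + b" 2] unfolding V_def p_def a_def b_def by simp
qed

lemma in_rkhs_ksig_add:
  assumes kernel: "is_kernel X k" and \<sigma>: "\<sigma> > 0"
    and f: "in_rkhs X k f" and g: "in_rkhs X (\<lambda>u v. \<sigma>\<^sup>2 * delta u v) g"
  shows "in_rkhs X (ksig k \<sigma>) (\<lambda>u. f u + g u)"
proof (rule in_rkhs_ksig_if_bdd_interp[OF kernel \<sigma>])
  show "bdd_above ((\<lambda>S. kgram (ksig k \<sigma>) (interp_set k \<sigma> (\<lambda>u. f u + g u) S)) ` {S. finite S \<and> S \<subseteq> X})"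
    using kgram_interp_set_add_le[OF kernel \<sigma> f g] by (intro bdd_aboveI2) auto
qed

section \<open>Regret of the upper confidence bound rule\<close>

lemma ucb_regret_step_le:
  assumes kernel: "is_kernel X k" and \<sigma>: "\<sigma> > 0"
    and f: "in_rkhs X k f" and g: "in_rkhs X (\<lambda>u v. \<sigma>\<^sup>2 * delta u v) g" and h: "h = (\<lambda>u. f u + g u)"
    and xs: "set xs \<subseteq> X" "distinct xs" and xstar: "xstar \<in> X" and y: "y \<in> X"
    and ucb: "post_mean k \<sigma> xs (map h xs) xstar + rkhs_norm X (ksig k \<sigma>) h * sqrt (post_var k \<sigma> xs xstar)
              \<le> post_mean k \<sigma> xs (map h xs) y + rkhs_norm X (ksig k \<sigma>) h * sqrt (post_var k \<sigma> xs y)"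
  shows "f xstar - f y \<le> 2 * rkhs_norm X (ksig k \<sigma>) h * sqrt (post_var k \<sigma> xs y)
           + 2 * (rkhs_norm X (ksig k \<sigma>) h + rkhs_norm X (\<lambda>u v. \<sigma>\<^sup>2 * delta u v) g) * \<sigma>"
proof -
  have "in_rkhs X (ksig k \<sigma>) h" unfolding h by (rule in_rkhs_ksig_add[OF kernel \<sigma> f g])
  note confidence = abs_sub_post_mean_le[OF kernel \<sigma> this xs]
  have "f xstar - f y = (h xstar - h y) - g xstar + g y" unfolding h by simp
  then show ?thesis
    using confidence[OF xstar] confidence[OF y] ucb
      abs_le_noise_rkhs_norm[OF \<sigma> g xstar] abs_le_noise_rkhs_norm[OF \<sigma> g y]
    by (simp add: algebra_simps abs_le_iff)
qed

lemma sum_post_var_history_le: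
  assumes kernel: "is_kernel X k" and \<sigma>: "\<sigma> > 0" and B: "B > 0"
    and diag: "\<forall>u\<in>X. ksig k \<sigma> u u \<le> B" and x: "\<forall>t\<in>{1..T}. x t \<in> X"
  shows "(\<Sum>t=1..T. post_var k \<sigma> (map x [1..<t]) (x t))
           \<le> B / ln (1 + B / \<sigma>\<^sup>2) * (2 * max_info_gain X k \<sigma> T)"
proof -
  define ys where "ys = map x [1..<Suc T]"
  have ys: "set ys \<subseteq> X" "length ys = T" unfolding ys_def using x by auto
  have "(\<Sum>t=1..T. post_var k \<sigma> (map x [1..<t]) (x t))
      = (\<Sum>i<T. post_var k \<sigma> (map x [1..<Suc i]) (x (Suc i)))"
    by (simp add: sum.atLeast1_atMost_eq)
  also have "\<dots> = (\<Sum>i<T. post_var k \<sigma> (take i ys) (ys ! i))"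
    unfolding ys_def by (intro sum.cong refl) (simp add: take_map take_upt del: upt_Suc)
  also have "\<dots> \<le> B / ln (1 + B / \<sigma>\<^sup>2) * (2 * max_info_gain X k \<sigma> T)"
    using sum_post_var_le_info_gain[OF kernel \<sigma> B diag ys(1)] ys(2) by simp
  finally show ?thesis .
qed

lemma sum_sqrt_le_sqrt_card_mult_sum:
  fixes P :: "'a \<Rightarrow> real"
  assumes "\<And>t. t \<in> A \<Longrightarrow> P t \<ge> 0"
  shows "(\<Sum>t\<in>A. sqrt (P t)) \<le> sqrt (real (card A) * (\<Sum>t\<in>A. P t))"
proof -
  have "(\<Sum>t\<in>A. sqrt (P t))\<^sup>2 \<le> (\<Sum>t\<in>A. (sqrt (P t))\<^sup>2) * card A"
    by (rule sum_squared_le_sum_of_squares)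
  also have "\<dots> = card A * (\<Sum>t\<in>A. P t)" using assms by (simp add: mult.commute)
  finally show ?thesis
    using assms real_le_rsqrt sum_nonneg by (metis real_sqrt_ge_zero)
qed

lemma sqrt_mult_div_self:
  fixes T a :: real
  assumes "T > 0"
  shows "sqrt (T * a) / T = sqrt (a / T)"
proof -
  have "sqrt (T * a) / T = sqrt T * sqrt a / (sqrt T * sqrt T)" using assms by (simp add: real_sqrt_mult)
  also have "\<dots> = sqrt a / sqrt T" using assms by (simp del: real_sqrt_mult_self)
  also have "\<dots> = sqrt (a / T)" by (simp add: real_sqrt_divide)
  finally show ?thesis .
qed

lemma simple_regret_le_mean_regret:
  fixes F :: "nat \<Rightarrow> real"
  assumes "T \<ge> 1"
  shows "Fmax - (MAX t\<in>{1..T}. F t) \<le> (\<Sum>t=1..T. Fmax - F t) / T"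
proof -
  have "T * (Fmax - (MAX t\<in>{1..T}. F t)) = (\<Sum>t=1..T. Fmax - (MAX t\<in>{1..T}. F t))" by simp
  also have "\<dots> \<le> (\<Sum>t=1..T. Fmax - F t)" by (intro sum_mono) simp
  finally show ?thesis using assms by (simp add: field_simps)
qed

lemma ucb_cumulative_regret_le:
  assumes kernel: "is_kernel X k" and \<sigma>: "\<sigma> > 0" and diag: "\<forall>u\<in>X. ksig k \<sigma> u u \<le> B"
    and f: "in_rkhs X k f" and g: "in_rkhs X (\<lambda>u v. \<sigma>\<^sup>2 * delta u v) g" and h: "h = (\<lambda>u. f u + g u)"
    and xstar: "xstar \<in> X"
    and alg: "\<forall>t\<in>{1..T}. x t \<in> X \<and>
       (\<forall>u\<in>X. post_mean k \<sigma> (map x [1..<t]) (map (\<lambda>i. h (x i)) [1..<t]) u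
                 + rkhs_norm X (ksig k \<sigma>) h * sqrt (post_var k \<sigma> (map x [1..<t]) u)
             \<le> post_mean k \<sigma> (map x [1..<t]) (map (\<lambda>i. h (x i)) [1..<t]) (x t)
                 + rkhs_norm X (ksig k \<sigma>) h * sqrt (post_var k \<sigma> (map x [1..<t]) (x t)))"
    and inj: "inj_on x {1..T}"
  shows "(\<Sum>t=1..T. f xstar - f (x t))
           \<le> rkhs_norm X (ksig k \<sigma>) h * sqrt (T * (8 * B / ln (1 + B / \<sigma>\<^sup>2)) * max_info_gain X k \<sigma> T)
             + 2 * T * (rkhs_norm X (ksig k \<sigma>) h + rkhs_norm X (\<lambda>u v. \<sigma>\<^sup>2 * delta u v) g) * \<sigma>"
proof -
  define \<beta> where "\<beta> = rkhs_norm X (ksig k \<sigma>) h"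
  define \<gamma> where "\<gamma> = rkhs_norm X (\<lambda>u v. \<sigma>\<^sup>2 * delta u v) g"
  define c where "c = B / ln (1 + B / \<sigma>\<^sup>2)"
  define P where "P t = post_var k \<sigma> (map x [1..<t]) (x t)" for t
  have \<beta>: "\<beta> \<ge> 0"
    unfolding \<beta>_def h using rkhs_norm_nonneg[OF is_kernel_ksig[OF kernel] in_rkhs_ksig_add[OF kernel \<sigma> f g]] .
  have B: "B > 0"
  proof -
    have "0 \<le> k xstar xstar" using kgram_nonneg[OF kernel, of "[(xstar, 1)]"] xstar by (simp add: kgram_single)
    moreover have "k xstar xstar + \<sigma>\<^sup>2 \<le> B" using diag xstar by (simp add: ksig_def delta_def)
    ultimately show ?thesis using \<sigma> by (smt (verit) zero_less_power)
  qed
  have history: "set (map x [1..<t]) \<subseteq> X" "distinct (map x [1..<t])" if "t \<in> {1..T}" for t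
  proof -
    have "{1..<t} \<subseteq> {1..T}" using that by auto
    then show "set (map x [1..<t]) \<subseteq> X" "distinct (map x [1..<t])"
      using alg inj_on_subset[OF inj] by (auto simp: distinct_map)
  qed
  have point: "x t \<in> X" if "t \<in> {1..T}" for t using alg that by blast
  have P: "P t \<ge> 0" if "t \<in> {1..T}" for t
    unfolding P_def by (rule post_var_nonneg[OF kernel history(1)[OF that] \<sigma> point[OF that]])
  have step: "f xstar - f (x t) \<le> 2 * \<beta> * sqrt (P t) + 2 * (\<beta> + \<gamma>) * \<sigma>" if t: "t \<in> {1..T}" for t
  proof -
    from alg t xstar
    have "post_mean k \<sigma> (map x [1..<t]) (map (\<lambda>i. h (x i)) [1..<t]) xstar
            + \<beta> * sqrt (post_var k \<sigma> (map x [1..<t]) xstar)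
          \<le> post_mean k \<sigma> (map x [1..<t]) (map (\<lambda>i. h (x i)) [1..<t]) (x t) + \<beta> * sqrt (P t)"
      unfolding \<beta>_def P_def by blast
    then show ?thesis
      using ucb_regret_step_le[OF kernel \<sigma> f g h history[OF t] xstar point[OF t]]
      unfolding \<beta>_def \<gamma>_def P_def by (simp add: comp_def)
  qed
  have "(\<Sum>t=1..T. f xstar - f (x t)) \<le> (\<Sum>t=1..T. 2 * \<beta> * sqrt (P t) + 2 * (\<beta> + \<gamma>) * \<sigma>)"
    by (rule sum_mono) (rule step)
  also have "\<dots> = 2 * \<beta> * (\<Sum>t=1..T. sqrt (P t)) + 2 * T * (\<beta> + \<gamma>) * \<sigma>"
    by (simp add: sum.distrib sum_distrib_left)
  finally have regret: "(\<Sum>t=1..T. f xstar - f (x t)) \<le> 2 * \<beta> * (\<Sum>t=1..T. sqrt (P t)) + 2 * T * (\<beta> + \<gamma>) * \<sigma>" .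
  have "(\<Sum>t=1..T. sqrt (P t)) \<le> sqrt (real T * (\<Sum>t=1..T. P t))"
    using sum_sqrt_le_sqrt_card_mult_sum[of "{1..T}" P] P by simp
  also have "\<dots> \<le> sqrt (T * (c * (2 * max_info_gain X k \<sigma> T)))"
    using sum_post_var_history_le[OF kernel \<sigma> B diag] alg
    unfolding P_def c_def by (intro real_sqrt_le_mono mult_left_mono) auto
  also have "\<dots> = sqrt (2\<^sup>2 * (T * (c * (2 * max_info_gain X k \<sigma> T)))) / 2"
    by (simp only: real_sqrt_mult real_sqrt_abs)
  also have "2\<^sup>2 * (T * (c * (2 * max_info_gain X k \<sigma> T))) = T * (8 * c) * max_info_gain X k \<sigma> T"
    by simp
  finally have "2 * \<beta> * (\<Sum>t=1..T. sqrt (P t)) \<le> \<beta> * sqrt (T * (8 * c) * max_info_gain X k \<sigma> T)"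
    using \<beta> mult_left_mono by fastforce
  with regret show ?thesis unfolding \<beta>_def \<gamma>_def c_def by (simp add: mult_ac)
qed
theorem theorem4:
  fixes X :: "'a::euclidean_space set"
    and k :: "'a \<Rightarrow> 'a \<Rightarrow> real"
    and \<sigma> B :: real
    and f g h :: "'a \<Rightarrow> real"
    and T :: nat
    and x :: "nat \<Rightarrow> 'a"
    and xstar :: 'a
  assumes "compact X"
    and "is_kernel X k"
    and "\<sigma> > 0"
    and "\<forall>u\<in>X. \<forall>v\<in>X. ksig k \<sigma> u v \<le> B"
    and "in_rkhs X k f"
    and "in_rkhs X (\<lambda>u v. \<sigma>\<^sup>2 * delta u v) g"
    and "h = (\<lambda>u. f u + g u)"
    and "xstar \<in> X" and "\<forall>u\<in>X. f u \<le> f xstar"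
    and "T \<ge> 1"
    and alg: "\<forall>t\<in>{1..T}. x t \<in> X \<and>
       (\<forall>u\<in>X. post_mean k \<sigma> (map x [1..<t]) (map (\<lambda>i. h (x i)) [1..<t]) u
                 + rkhs_norm X (ksig k \<sigma>) h * sqrt (post_var k \<sigma> (map x [1..<t]) u)
             \<le> post_mean k \<sigma> (map x [1..<t]) (map (\<lambda>i. h (x i)) [1..<t]) (x t)
                 + rkhs_norm X (ksig k \<sigma>) h * sqrt (post_var k \<sigma> (map x [1..<t]) (x t)))"
    and "inj_on x {1..T}"
  shows "(\<Sum>t=1..T. f xstar - f (x t))
           \<le> rkhs_norm X (ksig k \<sigma>) h
               * sqrt (T * (8 * B / ln (1 + B / \<sigma>\<^sup>2)) * max_info_gain X k \<sigma> T)
             + 2 * T * (rkhs_norm X (ksig k \<sigma>) h + rkhs_norm X (\<lambda>u v. \<sigma>\<^sup>2 * delta u v) g) * \<sigma>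
         \<and> f xstar - (MAX t\<in>{1..T}. f (x t))
           \<le> rkhs_norm X (ksig k \<sigma>) h
               * sqrt ((8 * B / ln (1 + B / \<sigma>\<^sup>2)) * max_info_gain X k \<sigma> T / T)
             + 2 * (rkhs_norm X (ksig k \<sigma>) h + rkhs_norm X (\<lambda>u v. \<sigma>\<^sup>2 * delta u v) g) * \<sigma>"
proof -
  let ?\<beta> = "rkhs_norm X (ksig k \<sigma>) h"
  let ?\<gamma> = "rkhs_norm X (\<lambda>u v. \<sigma>\<^sup>2 * delta u v) g"
  let ?C = "8 * B / ln (1 + B / \<sigma>\<^sup>2) * max_info_gain X k \<sigma> T"
  have T: "real T > 0" using \<open>T \<ge> 1\<close> by simp
  have cumulative: "(\<Sum>t=1..T. f xstar - f (x t)) \<le> ?\<beta> * sqrt (T * ?C) + 2 * T * (?\<beta> + ?\<gamma>) * \<sigma>"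
    using ucb_cumulative_regret_le[OF assms(2,3) _ assms(5-8) alg assms(12)] assms(4)
    by (simp add: mult.assoc)
  have "f xstar - (MAX t\<in>{1..T}. f (x t)) \<le> (\<Sum>t=1..T. f xstar - f (x t)) / T"
    by (rule simple_regret_le_mean_regret) (rule \<open>T \<ge> 1\<close>)
  also have "\<dots> \<le> (?\<beta> * sqrt (T * ?C) + 2 * T * (?\<beta> + ?\<gamma>) * \<sigma>) / T"
    using cumulative T by (simp add: divide_right_mono)
  also have "\<dots> = ?\<beta> * (sqrt (T * ?C) / T) + 2 * (?\<beta> + ?\<gamma>) * \<sigma>"
    using T by (simp add: add_divide_distrib)
  also have "sqrt (T * ?C) / T = sqrt (?C / T)"
    by (rule sqrt_mult_div_self[OF T])
  finally show ?thesis using cumulative by (simp add: mult.assoc)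
qed

end
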